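(* Let $n\ge4$ and let $H$ be an admissible tensor on $\mathbb R^n_+$. If $Z_{abcd}=0$ in $\mathbb R^n_+$ for all $a,b,c,d$ and $\partial_nH_{ij}=0$ on $\partial\mathbb R^n_+$ for all $i,j=1,\dots,n-1$, then $H\equiv0$ in $\mathbb R^n_+$.
   Context: $\mathbb R^n_+=\{x\in\mathbb R^n:x_n\ge0\}$, $d=[\frac{n-2}{2}]$; indices $a,b,c,d,e,f$ range over $1,\dots,n$ and $i,j,k$ over $1,\dots,n-1$, with summation over repeated indices. An admissible tensor is a symmetric trace-free ($\sum_aH_{aa}=0$) 2-tensor $H$ on $\mathbb R^n_+$ with polynomial components $H_{ab}(x)=\sum_{1\le|\alpha|\le d}h_{ab,\alpha}x^\alpha$ ($\alpha$ multi-indices, $h_{ab,\alpha}\in\mathbb R$) satisfying $H_{an}\equiv0$ for all $a$, $\partial_kH_{ij}(0)=0$ for all $i,j,k\le n-1$, and $\sum_{j=1}^{n-1}x_jH_{ij}(x)=0$ for $x\in\partial\mathbb R^n_+$, $i\le n-1$. The algebraic Schouten tensor is $A_{ac}=\partial_c\partial_eH_{ae}+\partial_a\partial_eH_{ce}-\partial_e\partial_eH_{ac}-\frac1{n-1}\partial_e\partial_fH_{ef}\delta_{ac}$ and the algebraic Weyl tensor is $Z_{abcd}=\partial_b\partial_dH_{ac}-\partial_b\partial_cH_{ad}+\partial_a\partial_cH_{bd}-\partial_a\partial_dH_{bc}+\frac1{n-2}(A_{ac}\delta_{bd}-A_{ad}\delta_{bc}+A_{bd}\delta_{ac}-A_{bc}\delta_{ad})$.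 *)

theory Defs
  imports "HOL-Analysis.Analysis"
begin

text \<open>Points of R^n are functions x :: nat => real; only coordinates 1..n matter.
  The closed upper half space R^n_+ is {x. x n >= 0}, its boundary {x. x n = 0}.\<close>

definition pd :: "nat \<Rightarrow> ((nat \<Rightarrow> real) \<Rightarrow> real) \<Rightarrow> (nat \<Rightarrow> real) \<Rightarrow> real" where
  "pd c f x = deriv (\<lambda>t. f (x(c := x c + t))) 0"

definition multi_indices :: "nat \<Rightarrow> nat \<Rightarrow> (nat \<Rightarrow> nat) set" where
  "multi_indices n dd = {\<alpha>. (\<forall>k. k \<notin> {1..n} \<longrightarrow> \<alpha> k = 0) \<and>
      1 \<le> (\<Sum>k=1..n. \<alpha> k) \<and> (\<Sum>k=1..n. \<alpha> k) \<le> dd}"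

definition monomial_fun :: "nat \<Rightarrow> (nat \<Rightarrow> nat) \<Rightarrow> (nat \<Rightarrow> real) \<Rightarrow> real" where
  "monomial_fun n \<alpha> x = (\<Prod>k=1..n. x k ^ \<alpha> k)"

definition admissible :: "nat \<Rightarrow> (nat \<Rightarrow> nat \<Rightarrow> (nat \<Rightarrow> real) \<Rightarrow> real) \<Rightarrow> bool" where
  "admissible n H \<longleftrightarrow>
     (\<exists>h :: nat \<Rightarrow> nat \<Rightarrow> (nat \<Rightarrow> nat) \<Rightarrow> real.
        \<forall>a\<in>{1..n}. \<forall>b\<in>{1..n}. \<forall>x.
          H a b x = (\<Sum>\<alpha>\<in>multi_indices n ((n - 2) div 2). h a b \<alpha> * monomial_fun n \<alpha> x))
   \<and> (\<forall>a\<in>{1..n}. \<forall>b\<in>{1..n}. \<forall>x. x n \<ge> 0 \<longrightarrow> H a b x = H b a x)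
   \<and> (\<forall>x. x n \<ge> 0 \<longrightarrow> (\<Sum>a=1..n. H a a x) = 0)
   \<and> (\<forall>a\<in>{1..n}. \<forall>x. x n \<ge> 0 \<longrightarrow> H a n x = 0)
   \<and> (\<forall>i\<in>{1..n-1}. \<forall>j\<in>{1..n-1}. \<forall>k\<in>{1..n-1}. pd k (H i j) (\<lambda>_. 0) = 0)
   \<and> (\<forall>i\<in>{1..n-1}. \<forall>x. x n = 0 \<longrightarrow> (\<Sum>j=1..n-1. x j * H i j x) = 0)"

definition schouten :: "nat \<Rightarrow> (nat \<Rightarrow> nat \<Rightarrow> (nat \<Rightarrow> real) \<Rightarrow> real) \<Rightarrow> nat \<Rightarrow> nat \<Rightarrow> (nat \<Rightarrow> real) \<Rightarrow> real" where
  "schouten n H a c x =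
     (\<Sum>e=1..n. pd c (pd e (H a e)) x) + (\<Sum>e=1..n. pd a (pd e (H c e)) x)
     - (\<Sum>e=1..n. pd e (pd e (H a c)) x)
     - (1 / (real n - 1)) * (\<Sum>e=1..n. \<Sum>f=1..n. pd e (pd f (H e f)) x) * (if a = c then 1 else 0)"

definition weyl :: "nat \<Rightarrow> (nat \<Rightarrow> nat \<Rightarrow> (nat \<Rightarrow> real) \<Rightarrow> real) \<Rightarrow> nat \<Rightarrow> nat \<Rightarrow> nat \<Rightarrow> nat \<Rightarrow> (nat \<Rightarrow> real) \<Rightarrow> real" where
  "weyl n H a b c d x =
     pd b (pd d (H a c)) x - pd b (pd c (H a d)) x + pd a (pd c (H b d)) x - pd a (pd d (H b c)) x
     + (1 / (real n - 2)) *
       (schouten n H a c x * (if b = d then 1 else 0) - schouten n H a d x * (if b = c then 1 else 0)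
        + schouten n H b d x * (if a = c then 1 else 0) - schouten n H b c x * (if a = d then 1 else 0))"

end

theory Submission
  imports Defs "HOL-Computational_Algebra.Polynomial"
begin

(*
  Every
  hypothesis is linear in H and compatible with the dilations x |-> t x, and a polynomial
  identity on the half space x_n >= 0 holds everywhere; hence each homogeneous component
  G of H, of some degree k >= 1, satisfies all hypotheses on the whole space
  (locale flat_homog_tensor), and it suffices to show G = 0.

  For such G the argument has two stages, with A the Schouten tensor of G.
  (1) Boundary. The divergence of the Weyl tensor is (n-3)/(n-2) times the Cotton tensor,
      so d_b A_ac = d_a A_bc. Contracting the tangential Weyl equations with x_j x_l and
      using x_j G_ij = 0 on x_n = 0 gives G_ij in terms of A there, and the trace-free
      condition gives a trace identity. For k >= 2 it follows that f = x_j x_l A_jl,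
      restricted to x_n = 0, satisfies |x'|^2 Lap' f = -k (k-1) (n-3) f, and a descent on
      the degree (tangential_descent) gives f = 0; successively A_ij = 0 and G_ij = 0 on
      the boundary.
  (2) Interior. The Weyl equation Z_injn = 0 expresses (n-3) d_n^2 G_ij by tangential
      derivatives; with the zero Cauchy data from (1) and the hypothesis d_n G_ij = 0 on
      the boundary, a descent on the degree (normal_system_zero) gives G_ij = 0.
*)

inductive_set poly_in :: "nat set \<Rightarrow> ((nat \<Rightarrow> real) \<Rightarrow> real) set" for I where
  pconst: "(\<lambda>x. c) \<in> poly_in I"
| pcoord: "k \<in> I \<Longrightarrow> (\<lambda>x. x k) \<in> poly_in I"
| padd: "f \<in> poly_in I \<Longrightarrow> g \<in> poly_in I \<Longrightarrow> (\<lambda>x. f x + g x) \<in> poly_in I"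
| pmult: "f \<in> poly_in I \<Longrightarrow> g \<in> poly_in I \<Longrightarrow> (\<lambda>x. f x * g x) \<in> poly_in I"

definition line :: "(nat \<Rightarrow> real) \<Rightarrow> (nat \<Rightarrow> real) \<Rightarrow> real \<Rightarrow> nat \<Rightarrow> real" where
  "line y v t = (\<lambda>i. y i + t * v i)"

(* The Kronecker delta; kron c is also the c-th coordinate vector. *)
definition kron :: "nat \<Rightarrow> nat \<Rightarrow> real" where "kron a b = (if a = b then 1 else 0)"

lemma kron_sym: "kron a b = kron b a" unfolding kron_def by auto
lemma kron_same[simp]: "kron a a = 1" unfolding kron_def by auto

lemma sum_kron: "finite A \<Longrightarrow> (\<Sum>d\<in>A. f d * kron a d) = (if a \<in> A then f a else 0)"
proof -
  assume "finite A"
  have "(\<Sum>d\<in>A. f d * kron a d) = (\<Sum>d\<in>A. if a = d then f d else 0)" by (rule sum.cong) (auto simp: kron_def)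
  then show ?thesis using \<open>finite A\<close> by (simp add: sum.delta)
qed

lemma sum_kron': "finite A \<Longrightarrow> (\<Sum>d\<in>A. f d * kron d a) = (if a \<in> A then f a else 0)"
  using sum_kron[of A f a] by (simp add: kron_sym)

lemma sum_kron_left: "finite A \<Longrightarrow> (\<Sum>i\<in>A. kron c i * v i) = (if c \<in> A then v c else 0)"
  using sum_kron[of A v c] by (simp add: mult.commute)

lemma upd_eq_line: "x(c := x c + s) = line x (kron c) s"
  by (auto simp: line_def kron_def fun_eq_iff)

lemma poly_in_line_deriv:
  assumes "f \<in> poly_in I" and fin: "finite I"
  shows "\<exists>Df. (\<forall>i. Df i \<in> poly_in I) \<and>
    (\<forall>y v t. ((\<lambda>s. f (line y v s)) has_real_derivative (\<Sum>i\<in>I. v i * Df i (line y v t))) (at t))"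
  using assms(1)
proof induction
  case (pconst c)
  show ?case by (rule exI[of _ "\<lambda>i x. 0"]) (auto intro: poly_in.pconst)
next
  case (pcoord k)
  show ?case
  proof (rule exI[of _ "\<lambda>i x. kron k i"], intro conjI allI)
    fix i show "(\<lambda>x. kron k i) \<in> poly_in I" by (rule poly_in.pconst)
  next
    fix y v :: "nat \<Rightarrow> real" and t :: real
    have "(\<Sum>i\<in>I. v i * kron k i) = v k"
      using pcoord fin sum_kron[of I v k] by simp
    moreover have "((\<lambda>s. y k + s * v k) has_real_derivative v k) (at t)"
      by (auto intro!: derivative_eq_intros)
    ultimately show "((\<lambda>s. line y v s k) has_real_derivative (\<Sum>i\<in>I. v i * kron k i)) (at t)"
      unfolding line_def by simp
  qed
next
  case (padd f g)
  then obtain Df Dg where f: "\<forall>i. Df i \<in> poly_in I" "\<forall>y v t. ((\<lambda>s. f (line y v s)) has_real_derivative (\<Sum>i\<in>I. v i * Df i (line y v t))) (at t)"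
    and g: "\<forall>i. Dg i \<in> poly_in I" "\<forall>y v t. ((\<lambda>s. g (line y v s)) has_real_derivative (\<Sum>i\<in>I. v i * Dg i (line y v t))) (at t)"
    by blast
  show ?case
  proof (rule exI[of _ "\<lambda>i x. Df i x + Dg i x"], intro conjI allI)
    fix i show "(\<lambda>x. Df i x + Dg i x) \<in> poly_in I" using f g by (auto intro: poly_in.padd)
  next
    fix y v :: "nat \<Rightarrow> real" and t :: real
    have "((\<lambda>s. f (line y v s) + g (line y v s)) has_real_derivative
        (\<Sum>i\<in>I. v i * Df i (line y v t)) + (\<Sum>i\<in>I. v i * Dg i (line y v t))) (at t)"
      using f g by (auto intro!: derivative_eq_intros)
    then show "((\<lambda>s. f (line y v s) + g (line y v s)) has_real_derivative
        (\<Sum>i\<in>I. v i * (Df i (line y v t) + Dg i (line y v t)))) (at t)"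
      by (simp add: distrib_left sum.distrib)
  qed
next
  case (pmult f g)
  then obtain Df Dg where f: "\<forall>i. Df i \<in> poly_in I" "\<forall>y v t. ((\<lambda>s. f (line y v s)) has_real_derivative (\<Sum>i\<in>I. v i * Df i (line y v t))) (at t)"
    and g: "\<forall>i. Dg i \<in> poly_in I" "\<forall>y v t. ((\<lambda>s. g (line y v s)) has_real_derivative (\<Sum>i\<in>I. v i * Dg i (line y v t))) (at t)"
    by blast
  show ?case
  proof (rule exI[of _ "\<lambda>i x. Df i x * g x + f x * Dg i x"], intro conjI allI)
    fix i show "(\<lambda>x. Df i x * g x + f x * Dg i x) \<in> poly_in I"
      using f(1) g(1) \<open>f \<in> poly_in I\<close> \<open>g \<in> poly_in I\<close> by (intro poly_in.padd poly_in.pmult) auto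
  next
    fix y v :: "nat \<Rightarrow> real" and t :: real
    have "((\<lambda>s. f (line y v s) * g (line y v s)) has_real_derivative
        (\<Sum>i\<in>I. v i * Df i (line y v t)) * g (line y v t) + f (line y v t) * (\<Sum>i\<in>I. v i * Dg i (line y v t))) (at t)"
      using f(2) g(2) by (auto intro!: derivative_eq_intros)
    then show "((\<lambda>s. f (line y v s) * g (line y v s)) has_real_derivative
        (\<Sum>i\<in>I. v i * (Df i (line y v t) * g (line y v t) + f (line y v t) * Dg i (line y v t)))) (at t)"
      by (simp add: distrib_left sum.distrib sum_distrib_left sum_distrib_right mult_ac)
  qed
qed

lemma pd_from_deriv:
  "((\<lambda>s. F (x(c := x c + s))) has_real_derivative D) (at 0) \<Longrightarrow> pd c F x = D"
  unfolding pd_def by (rule DERIV_imp_deriv)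

lemma poly_in_pd_ex:
  assumes "f \<in> poly_in I" "finite I"
  shows "\<exists>Df. (\<forall>i. Df i \<in> poly_in I) \<and> (\<forall>c x. pd c f x = (if c \<in> I then Df c x else 0))
     \<and> (\<forall>y v t. ((\<lambda>s. f (line y v s)) has_real_derivative (\<Sum>i\<in>I. v i * Df i (line y v t))) (at t))"
proof -
  obtain Df where D: "\<forall>i. Df i \<in> poly_in I"
    "\<forall>y v t. ((\<lambda>s. f (line y v s)) has_real_derivative (\<Sum>i\<in>I. v i * Df i (line y v t))) (at t)"
    using poly_in_line_deriv[OF assms] by blast
  have "pd c f x = (if c \<in> I then Df c x else 0)" for c x
  proof (rule pd_from_deriv)
    have "line x (kron c) 0 = x" by (simp add: line_def)
    then show "((\<lambda>s. f (x(c := x c + s))) has_real_derivative (if c \<in> I then Df c x else 0)) (at 0)"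
      using D(2)[rule_format, of x "kron c" 0] assms(2)
      unfolding upd_eq_line by (simp add: sum_kron_left)
  qed
  with D show ?thesis by blast
qed

lemma poly_in_pd[intro,simp]: "f \<in> poly_in I \<Longrightarrow> finite I \<Longrightarrow> pd c f \<in> poly_in I"
proof -
  assume "f \<in> poly_in I" "finite I"
  then obtain Df where "\<forall>i. Df i \<in> poly_in I" "\<forall>c x. pd c f x = (if c \<in> I then Df c x else 0)"
    using poly_in_pd_ex by blast
  then have "pd c f = (if c \<in> I then Df c else (\<lambda>x. 0))" by auto
  then show ?thesis using \<open>\<forall>i. Df i \<in> poly_in I\<close> by (simp add: poly_in.pconst)
qed

lemma poly_in_line_pd:
  assumes "f \<in> poly_in I" "finite I"
  shows "((\<lambda>s. f (line y v s)) has_real_derivative (\<Sum>i\<in>I. v i * pd i f (line y v t))) (at t)"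
proof -
  obtain Df where "\<forall>c x. pd c f x = (if c \<in> I then Df c x else 0)"
    "\<forall>y v t. ((\<lambda>s. f (line y v s)) has_real_derivative (\<Sum>i\<in>I. v i * Df i (line y v t))) (at t)"
    using poly_in_pd_ex[OF assms] by blast
  moreover have "(\<Sum>i\<in>I. v i * pd i f (line y v t)) = (\<Sum>i\<in>I. v i * Df i (line y v t))"
    by (rule sum.cong) (use calculation in auto)
  ultimately show ?thesis by simp
qed

lemma poly_in_coord_deriv:
  assumes "f \<in> poly_in I" "finite I"
  shows "((\<lambda>s. f (x(c := x c + s))) has_real_derivative pd c f (x(c := x c + w))) (at w)"
proof -
  have "pd c f y = 0" if "c \<notin> I" for y
    using poly_in_pd_ex[OF assms] that by auto
  then show ?thesis
    using poly_in_line_pd[OF assms, of x "kron c" w] assms(2)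
    unfolding upd_eq_line by (simp add: sum_kron_left split: if_splits)
qed

definition is_poly :: "((nat \<Rightarrow> real) \<Rightarrow> real) \<Rightarrow> bool" where
  "is_poly f \<longleftrightarrow> (\<exists>I. finite I \<and> f \<in> poly_in I)"

lemma poly_in_mono: "f \<in> poly_in I \<Longrightarrow> I \<subseteq> J \<Longrightarrow> f \<in> poly_in J"
  by (induction rule: poly_in.induct) (auto intro: poly_in.intros)

lemma is_poly_two: "is_poly f \<Longrightarrow> is_poly g \<Longrightarrow> \<exists>I. finite I \<and> f \<in> poly_in I \<and> g \<in> poly_in I"
  unfolding is_poly_def by (metis finite_Un sup.cobounded1 sup.cobounded2 poly_in_mono)

lemma is_poly_deriv0: "is_poly f \<Longrightarrow> ((\<lambda>s. f (x(c := x c + s))) has_real_derivative pd c f x) (at 0)"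
  unfolding is_poly_def using poly_in_coord_deriv[of f _ x c 0] by auto

lemma poly_in_cmult[intro,simp]: "f \<in> poly_in I \<Longrightarrow> (\<lambda>x. a * f x) \<in> poly_in I"
  by (rule poly_in.pmult[OF poly_in.pconst])
lemma poly_in_multc[intro,simp]: "f \<in> poly_in I \<Longrightarrow> (\<lambda>x. f x * a) \<in> poly_in I"
  by (rule poly_in.pmult[OF _ poly_in.pconst])
lemma poly_in_divc[intro,simp]: "f \<in> poly_in I \<Longrightarrow> (\<lambda>x. f x / a) \<in> poly_in I"
  using poly_in_multc[of f I "1/a"] by simp
lemma poly_in_const[intro,simp]: "(\<lambda>x. a) \<in> poly_in I" by (rule poly_in.pconst)
lemma poly_in_add[intro,simp]: "f \<in> poly_in I \<Longrightarrow> g \<in> poly_in I \<Longrightarrow> (\<lambda>x. f x + g x) \<in> poly_in I"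
  by (rule poly_in.padd)
lemma poly_in_mult[intro,simp]: "f \<in> poly_in I \<Longrightarrow> g \<in> poly_in I \<Longrightarrow> (\<lambda>x. f x * g x) \<in> poly_in I"
  by (rule poly_in.pmult)
lemma poly_in_uminus[intro,simp]: "f \<in> poly_in I \<Longrightarrow> (\<lambda>x. - f x) \<in> poly_in I"
  using poly_in_cmult[of f I "-1"] by simp
lemma poly_in_diff[intro,simp]: "f \<in> poly_in I \<Longrightarrow> g \<in> poly_in I \<Longrightarrow> (\<lambda>x. f x - g x) \<in> poly_in I"
  using poly_in_add[of f I "\<lambda>x. - g x"] by simp
lemma poly_in_coord[intro,simp]: "k \<in> I \<Longrightarrow> (\<lambda>x. x k) \<in> poly_in I" by (rule poly_in.pcoord)
lemma poly_in_sum[intro,simp]: "(\<And>i. i \<in> A \<Longrightarrow> F i \<in> poly_in I) \<Longrightarrow> (\<lambda>x. \<Sum>i\<in>A. F i x) \<in> poly_in I"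
  by (induction A rule: infinite_finite_induct) auto
lemma poly_in_prod[intro,simp]: "(\<And>i. i \<in> A \<Longrightarrow> F i \<in> poly_in I) \<Longrightarrow> (\<lambda>x. \<Prod>i\<in>A. F i x) \<in> poly_in I"
  by (induction A rule: infinite_finite_induct) auto
lemma poly_in_power[intro,simp]: "f \<in> poly_in I \<Longrightarrow> (\<lambda>x. f x ^ m) \<in> poly_in I"
  by (induction m) simp_all

lemma is_poly_const[simp]: "is_poly (\<lambda>x. a)" unfolding is_poly_def by (rule exI[of _ "{}"]) simp
lemma is_poly_coord[simp]: "is_poly (\<lambda>x. x k)" unfolding is_poly_def by (rule exI[of _ "{k}"]) simp
lemma is_poly_add[simp]: "is_poly f \<Longrightarrow> is_poly g \<Longrightarrow> is_poly (\<lambda>x. f x + g x)"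
  using is_poly_two unfolding is_poly_def by blast
lemma is_poly_mult[simp]: "is_poly f \<Longrightarrow> is_poly g \<Longrightarrow> is_poly (\<lambda>x. f x * g x)"
  using is_poly_two unfolding is_poly_def by blast
lemma is_poly_diff[simp]: "is_poly f \<Longrightarrow> is_poly g \<Longrightarrow> is_poly (\<lambda>x. f x - g x)"
  using is_poly_two unfolding is_poly_def by blast
lemma is_poly_cmult[simp]: "is_poly f \<Longrightarrow> is_poly (\<lambda>x. a * f x)"
  unfolding is_poly_def by (metis poly_in_cmult)
lemma is_poly_multc[simp]: "is_poly f \<Longrightarrow> is_poly (\<lambda>x. f x * a)"
  unfolding is_poly_def by (metis poly_in_multc)
lemma is_poly_divc[simp]: "is_poly f \<Longrightarrow> is_poly (\<lambda>x. f x / a)"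
  unfolding is_poly_def by (metis poly_in_divc)
lemma is_poly_pd[simp]: "is_poly f \<Longrightarrow> is_poly (pd c f)"
  unfolding is_poly_def by (metis poly_in_pd)
lemma is_poly_sum[simp]: "(\<And>i. i \<in> A \<Longrightarrow> is_poly (F i)) \<Longrightarrow> is_poly (\<lambda>x. \<Sum>i\<in>A. F i x)"
  by (induction A rule: infinite_finite_induct) auto

lemma pd_const[simp]: "pd c (\<lambda>x. a) = (\<lambda>x. 0)"
  by (rule ext, rule pd_from_deriv) simp

lemma pd_coord[simp]: "pd c (\<lambda>x. x k) = (\<lambda>x. if c = k then 1 else 0)"
proof (rule ext, rule pd_from_deriv)
  fix x
  show "((\<lambda>s. (x(c := x c + s)) k) has_real_derivative (if c = k then 1 else 0)) (at 0)"
    by (cases "c = k") (auto intro!: derivative_eq_intros)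
qed

lemma pd_add[simp]: "is_poly f \<Longrightarrow> is_poly g \<Longrightarrow> pd c (\<lambda>x. f x + g x) = (\<lambda>x. pd c f x + pd c g x)"
  by (rule ext, rule pd_from_deriv) (auto intro!: derivative_eq_intros is_poly_deriv0)

lemma pd_mult[simp]: "is_poly f \<Longrightarrow> is_poly g \<Longrightarrow>
   pd c (\<lambda>x. f x * g x) = (\<lambda>x. pd c f x * g x + f x * pd c g x)"
  by (rule ext, rule pd_from_deriv) (auto intro!: derivative_eq_intros is_poly_deriv0)

lemma pd_cmult[simp]: "is_poly f \<Longrightarrow> pd c (\<lambda>x. a * f x) = (\<lambda>x. a * pd c f x)"
  by (rule ext, rule pd_from_deriv) (auto intro!: derivative_eq_intros is_poly_deriv0)

lemma pd_multc[simp]: "is_poly f \<Longrightarrow> pd c (\<lambda>x. f x * a) = (\<lambda>x. pd c f x * a)"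
  by (rule ext, rule pd_from_deriv) (auto intro!: derivative_eq_intros is_poly_deriv0)

lemma pd_divc[simp]: "is_poly f \<Longrightarrow> pd c (\<lambda>x. f x / a) = (\<lambda>x. pd c f x / a)"
  using pd_multc[of f c "1/a"] by simp

lemma pd_uminus[simp]: "is_poly f \<Longrightarrow> pd c (\<lambda>x. - f x) = (\<lambda>x. - pd c f x)"
  by (rule ext, rule pd_from_deriv) (auto intro!: derivative_eq_intros is_poly_deriv0)

lemma pd_diff[simp]: "is_poly f \<Longrightarrow> is_poly g \<Longrightarrow> pd c (\<lambda>x. f x - g x) = (\<lambda>x. pd c f x - pd c g x)"
  by (rule ext, rule pd_from_deriv) (auto intro!: derivative_eq_intros is_poly_deriv0)

lemma pd_sum[simp]: "(\<And>i. i \<in> A \<Longrightarrow> is_poly (F i)) \<Longrightarrow>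
   pd c (\<lambda>x. \<Sum>i\<in>A. F i x) = (\<lambda>x. \<Sum>i\<in>A. pd c (F i) x)"
proof (induction A rule: infinite_finite_induct)
  case (insert a A)
  then have "pd c (\<lambda>x. F a x + (\<Sum>i\<in>A. F i x)) = (\<lambda>x. pd c (F a) x + pd c (\<lambda>x. \<Sum>i\<in>A. F i x) x)"
    by (intro pd_add) auto
  with insert show ?case by simp
qed simp_all

lemma pd_comm: "is_poly f \<Longrightarrow> pd a (pd b f) = pd b (pd a f)"
proof -
  assume "is_poly f"
  then obtain I where I: "finite I" "f \<in> poly_in I" unfolding is_poly_def by blast
  from I(2) show ?thesis
  proof induction
    case (padd f g)
    then have "is_poly f" "is_poly g" unfolding is_poly_def using I(1) by auto
    with padd show ?case by simp
  next
    case (pmult f g)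
    then have "is_poly f" "is_poly g" unfolding is_poly_def using I(1) by auto
    with pmult show ?case by (simp add: algebra_simps)
  qed simp_all
qed

lemma pd3_comm: "is_poly F \<Longrightarrow> pd d (pd b (pd c F)) = pd b (pd c (pd d F))"
  by (metis pd_comm is_poly_pd)

(* Dilation x \<mapsto> t x, and homogeneity: "homog s r F" says t^s F(t x) = t^r F(x) for t > 0,
   i.e. F is homogeneous of degree r - s (an integer that may be negative). Keeping s and r
   separate lets differentiation lower the degree without any integer arithmetic. *)
definition dilate :: "real \<Rightarrow> (nat \<Rightarrow> real) \<Rightarrow> nat \<Rightarrow> real" where
  "dilate t x = (\<lambda>i. t * x i)"

definition homog :: "nat \<Rightarrow> nat \<Rightarrow> ((nat \<Rightarrow> real) \<Rightarrow> real) \<Rightarrow> bool" where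
  "homog s r F \<longleftrightarrow> (\<forall>t>0. \<forall>x. t ^ s * F (dilate t x) = t ^ r * F x)"

lemma homog_add[intro]: "homog s r F \<Longrightarrow> homog s r G \<Longrightarrow> homog s r (\<lambda>x. F x + G x)"
  unfolding homog_def by (simp add: distrib_left)
lemma homog_diff[intro]: "homog s r F \<Longrightarrow> homog s r G \<Longrightarrow> homog s r (\<lambda>x. F x - G x)"
  unfolding homog_def by (simp add: right_diff_distrib)
lemma homog_cmult[intro]: "homog s r F \<Longrightarrow> homog s r (\<lambda>x. a * F x)"
  unfolding homog_def by (metis mult.left_commute)
lemma homog_multc[intro]: "homog s r F \<Longrightarrow> homog s r (\<lambda>x. F x * a)"
  unfolding homog_def by (metis mult.assoc)
lemma homog_divc[intro]: "homog s r F \<Longrightarrow> homog s r (\<lambda>x. F x / a)"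
  using homog_multc[of s r F "1/a"] by simp
lemma homog_sum[intro]: "(\<And>i. i \<in> A \<Longrightarrow> homog s r (F i)) \<Longrightarrow> homog s r (\<lambda>x. \<Sum>i\<in>A. F i x)"
  unfolding homog_def by (simp add: sum_distrib_left)
lemma homog_mult: "homog 0 r f \<Longrightarrow> homog 0 s g \<Longrightarrow> homog 0 (r + s) (\<lambda>x. f x * g x)"
  unfolding homog_def by (simp add: power_add mult_ac)
lemma homog_coord: "homog 0 1 (\<lambda>x. x j)"
  unfolding homog_def dilate_def by simp

lemma homog_lower: "homog s r F \<Longrightarrow> s \<le> r \<Longrightarrow> homog 0 (r - s) F"
  unfolding homog_def
proof (intro allI impI)
  fix t :: real and x assume "\<forall>t>0. \<forall>x. t ^ s * F (dilate t x) = t ^ r * F x" "s \<le> r" "t > 0"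
  then have "t ^ s * F (dilate t x) = t ^ s * (t ^ (r - s) * F x)"
    by (simp add: power_add[symmetric])
  then show "t ^ 0 * F (dilate t x) = t ^ (r - s) * F x" using \<open>t > 0\<close> by simp
qed

lemma dilate_upd: "t \<noteq> 0 \<Longrightarrow> (dilate t x)(i := dilate t x i + u) = dilate t (x(i := x i + u / t))"
  by (auto simp: dilate_def fun_eq_iff algebra_simps)

lemma homog_pd:
  assumes "is_poly F" "homog s r F"
  shows "homog (Suc s) r (pd i F)"
  unfolding homog_def
proof (intro allI impI)
  fix t :: real and x assume t: "t > 0"
  have eq: "F ((dilate t x)(i := dilate t x i + u)) = (t ^ r / t ^ s) * F (x(i := x i + u / t))" for u
  proof -
    have "t ^ s * F (dilate t (x(i := x i + u / t))) = t ^ r * F (x(i := x i + u / t))"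
      using assms(2) t unfolding homog_def by blast
    moreover have "(dilate t x)(i := dilate t x i + u) = dilate t (x(i := x i + u / t))"
      using t by (simp add: dilate_upd)
    ultimately show ?thesis using t by (simp add: field_simps)
  qed
  have "((\<lambda>u. F (x(i := x i + u / t))) has_real_derivative pd i F x * (1 / t)) (at 0)"
  proof (rule DERIV_chain2[of "\<lambda>w. F (x(i := x i + w))"])
    show "((\<lambda>w. F (x(i := x i + w))) has_real_derivative pd i F x) (at (0 / t))"
      using is_poly_deriv0[OF assms(1)] by simp
    show "((\<lambda>u. u / t) has_real_derivative 1 / t) (at 0)"
      using t by (auto intro!: derivative_eq_intros)
  qed
  then have "((\<lambda>u. F ((dilate t x)(i := dilate t x i + u))) has_real_derivative
      (t ^ r / t ^ s) * (pd i F x * (1 / t))) (at 0)"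
    unfolding eq by (rule DERIV_cmult)
  then have "pd i F (dilate t x) = (t ^ r / t ^ s) * (pd i F x * (1 / t))"
    by (rule pd_from_deriv)
  then show "t ^ Suc s * pd i F (dilate t x) = t ^ r * pd i F x"
    using t by (simp add: field_simps)
qed

lemma homog_pd2: "is_poly F \<Longrightarrow> homog 0 m F \<Longrightarrow> homog 2 m (pd u (pd v F))"
  by (metis homog_pd is_poly_pd One_nat_def Suc_1)

lemma line_origin: "line (\<lambda>i. 0) x t = dilate t x"
  by (simp add: line_def dilate_def)

lemma euler_identity:
  assumes "f \<in> poly_in I" "finite I" "homog 0 r f"
  shows "(\<Sum>i\<in>I. x i * pd i f x) = real r * f x"
proof -
  have D1: "((\<lambda>t. f (dilate t x)) has_real_derivative (\<Sum>i\<in>I. x i * pd i f (dilate 1 x))) (at 1)"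
    using poly_in_line_pd[OF assms(1,2), of "\<lambda>i. 0" x 1] by (simp add: line_origin)
  have D2: "((\<lambda>t. t ^ r * f x) has_real_derivative (\<Sum>i\<in>I. x i * pd i f (dilate 1 x))) (at 1)"
  proof (rule has_field_derivative_transform_within_open[OF D1, of "{0<..}"])
    show "\<And>t. t \<in> {0<..} \<Longrightarrow> f (dilate t x) = t ^ r * f x"
      using assms(3) unfolding homog_def by auto
  qed simp_all
  have D3: "((\<lambda>t. t ^ r * f x) has_real_derivative real r * 1 ^ (r - 1) * f x) (at 1)"
    by (auto intro!: derivative_eq_intros)
  have "dilate 1 x = x" by (simp add: dilate_def)
  then show ?thesis using DERIV_unique[OF D2 D3] by simp
qed

(* A polynomial which is homogeneous of negative degree vanishes: t^(s-r) f(t x) = f(x)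
   for t > 0, while the left-hand side tends to 0 as t \<rightarrow> 0+. *)
lemma homog_negative_zero:
  assumes "is_poly f" "homog s r f" "r < s"
  shows "f x = 0"
proof -
  obtain I where fI: "f \<in> poly_in I" "finite I" using assms(1) is_poly_def by blast
  define g where "g t = t ^ (s - r) * f (dilate t x)" for t :: real
  have "((\<lambda>t. f (dilate t x)) has_real_derivative (\<Sum>i\<in>I. x i * pd i f (dilate 0 x))) (at 0)"
    using poly_in_line_pd[OF fI, of "\<lambda>i. 0" x 0] by (simp add: line_origin)
  then have "isCont (\<lambda>t. f (dilate t x)) 0" by (rule DERIV_isCont)
  then have "isCont g 0" unfolding g_def by (intro continuous_intros)
  moreover have "g 0 = 0" using assms(3) by (simp add: g_def)
  ultimately have lim0: "(g \<longlongrightarrow> 0) (at_right 0)"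
    by (metis continuous_at_split continuous_within)
  have g_pos: "g t = f x" if "t > 0" for t
  proof -
    have "t ^ s * f (dilate t x) = t ^ r * f x" using assms(2) that unfolding homog_def by blast
    moreover have "t ^ s = t ^ r * t ^ (s - r)" using assms(3) by (simp add: power_add[symmetric])
    ultimately show ?thesis using that by (simp add: g_def)
  qed
  have "(g \<longlongrightarrow> f x) (at_right 0)"
  proof (rule Lim_transform_eventually[of "\<lambda>t. f x"])
    show "\<forall>\<^sub>F t in at_right 0. f x = g t"
      using g_pos eventually_at_right_less[of 0] by (auto elim: eventually_mono)
  qed simp
  with lim0 show ?thesis using tendsto_unique[OF trivial_limit_at_right_real] by metis
qed

lemma poly_zero_on_infinite:
  fixes p :: "real poly"
  assumes "infinite S" "\<And>t. t \<in> S \<Longrightarrow> poly p t = 0"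
  shows "p = 0"
proof (rule ccontr)
  assume "p \<noteq> 0"
  then have "finite {t. poly p t = 0}" by (rule poly_roots_finite)
  moreover have "S \<subseteq> {t. poly p t = 0}" using assms(2) by auto
  ultimately show False using assms(1) finite_subset by blast
qed

lemma power_sum_coeffs_zero:
  assumes "finite K" "\<forall>t>0. (\<Sum>k\<in>K. c k * t ^ k) = (0::real)" "j \<in> K"
  shows "c j = 0"
proof -
  define p where "p = (\<Sum>k\<in>K. monom (c k) k)"
  have "poly p t = (\<Sum>k\<in>K. c k * t ^ k)" for t
    unfolding p_def by (simp add: poly_sum poly_monom)
  then have "p = 0" using assms(2) by (intro poly_zero_on_infinite[of "{0<..}"]) (auto simp: infinite_Ioi)
  moreover have "coeff p j = c j" unfolding p_def using assms(1,3)
    by (simp add: coeff_sum coeff_monom sum.delta' cong: if_cong)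
  ultimately show ?thesis by simp
qed

lemma poly_in_univariate: "f \<in> poly_in I \<Longrightarrow> \<exists>p. \<forall>t. f (x(m := t)) = poly p t"
proof (induction rule: poly_in.induct)
  case (pconst c) then show ?case by (rule_tac x="[:c:]" in exI) simp
next
  case (pcoord k) then show ?case
    by (cases "k = m") (rule_tac x="[:0,1:]" in exI, simp, rule_tac x="[:x k:]" in exI, simp)
next
  case (padd f g) then show ?case by (metis poly_add)
next
  case (pmult f g) then show ?case by (metis poly_mult)
qed

lemma poly_vanish_half_space:
  assumes "is_poly f" "\<forall>x. x m \<ge> 0 \<longrightarrow> f x = 0"
  shows "f x = 0"
proof -
  obtain I where "f \<in> poly_in I" using assms(1) is_poly_def by blast
  then obtain p where p: "\<forall>t. f (x(m := t)) = poly p t" using poly_in_univariate by blast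
  have "p = 0"
  proof (rule poly_zero_on_infinite[of "{0..}"])
    show "poly p t = 0" if "t \<in> {0..}" for t
      using assms(2) p that by (metis atLeast_iff fun_upd_same)
  qed (simp add: infinite_Ici)
  then show ?thesis using p[rule_format, of "x m"] by simp
qed

lemma graded_components_zero:
  assumes K: "finite K" and h: "\<And>m. m \<in> K \<Longrightarrow> homog s (m + c) (\<Phi> m)"
    and Psc: "\<And>x t. P x \<Longrightarrow> t > 0 \<Longrightarrow> P (dilate t x)" and Z: "\<And>x. P x \<Longrightarrow> (\<Sum>m\<in>K. \<Phi> m x) = 0"
    and m: "m \<in> K" and x: "P x"
  shows "\<Phi> m x = 0"
proof (rule power_sum_coeffs_zero[OF K _ m, of "\<lambda>j. \<Phi> j x"])
  show "\<forall>t>0. (\<Sum>j\<in>K. \<Phi> j x * t ^ j) = 0"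
  proof (intro allI impI)
    fix t :: real assume t: "t > 0"
    have "0 = t ^ s * (\<Sum>j\<in>K. \<Phi> j (dilate t x))" using Z[OF Psc[OF x t]] by simp
    also have "\<dots> = (\<Sum>j\<in>K. t ^ (j + c) * \<Phi> j x)"
      unfolding sum_distrib_left by (rule sum.cong[OF refl]) (use h t in \<open>auto simp: homog_def\<close>)
    also have "\<dots> = t ^ c * (\<Sum>j\<in>K. \<Phi> j x * t ^ j)"
      by (simp add: sum_distrib_left power_add mult_ac)
    finally show "(\<Sum>j\<in>K. \<Phi> j x * t ^ j) = 0" using t by simp
  qed
qed

lemma sum_split_last:
  fixes f :: "nat \<Rightarrow> real"
  shows "n \<ge> 1 \<Longrightarrow> (\<Sum>j=1..n. f j) = (\<Sum>j=1..n-1. f j) + f n"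
  by (cases n) (auto simp: sum.cl_ivl_Suc)

lemma indicator_mult_left[simp]: "(if P then 1 else 0) * (a::real) = (if P then a else 0)" by simp
lemma indicator_mult_right[simp]: "(a::real) * (if P then 1 else 0) = (if P then a else 0)" by simp

lemma sum_cmult_delta[simp]:
  "finite A \<Longrightarrow> (\<Sum>j\<in>A. c * (if i = j then f j else 0)) = (if i \<in> A then c * f i else (0::real))"
  by (simp add: sum_distrib_left[symmetric])

lemma poly_in_restrict: "f \<in> poly_in I \<Longrightarrow> (\<lambda>x. f (x(m := 0))) \<in> poly_in I"
proof (induction rule: poly_in.induct)
  case (pcoord k) then show ?case by (cases "k = m") (auto intro: poly_in.intros)
qed (auto intro: poly_in.intros)

lemma homog_restrict: "homog 0 r F \<Longrightarrow> homog 0 r (\<lambda>x. F (x(m := 0)))"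
proof -
  assume h: "homog 0 r F"
  have "(dilate t x)(m := 0) = dilate t (x(m := 0))" for t x by (auto simp: dilate_def)
  then show ?thesis using h unfolding homog_def by simp
qed

lemma pd_restrict: "i \<noteq> m \<Longrightarrow> pd i (\<lambda>x. F (x(m := 0))) x = pd i F (x(m := 0))"
proof -
  assume "i \<noteq> m"
  then have "(x(i := x i + s))(m := 0) = (x(m := 0))(i := (x(m := 0)) i + s)" for s
    by (auto simp: fun_eq_iff)
  then show ?thesis unfolding pd_def by simp
qed

lemma indep_pd: "(\<And>x. F x = F (x(m := 0))) \<Longrightarrow> i \<noteq> m \<Longrightarrow> pd i F x = pd i F (x(m := 0))"
proof -
  assume F: "\<And>x. F x = F (x(m := 0))" and i: "i \<noteq> m"
  have "F = (\<lambda>x. F (x(m := 0)))" using F by (auto simp: fun_eq_iff)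
  then have "pd i F x = pd i (\<lambda>x. F (x(m := 0))) x" by simp
  also have "\<dots> = pd i F (x(m := 0))" by (rule pd_restrict[OF i])
  finally show ?thesis .
qed

lemma indep_pd_normal: "(\<And>x. F x = F (x(m := 0))) \<Longrightarrow> pd m F x = 0"
proof (rule pd_from_deriv)
  assume F: "\<And>x. F x = F (x(m := 0))"
  have "(\<lambda>s. F (x(m := x m + s))) = (\<lambda>s. F (x(m := 0)))" using F by (metis fun_upd_upd)
  then show "((\<lambda>s. F (x(m := x m + s))) has_real_derivative 0) (at 0)" by simp
qed

lemma hyperplane_pd_zero:
  assumes "\<And>x. x n = 0 \<Longrightarrow> F x = 0" "l \<noteq> n" "y n = 0"
  shows "pd l F y = 0"
proof (rule pd_from_deriv)
  have "(\<lambda>s. F (y(l := y l + s))) = (\<lambda>s. 0)" using assms by auto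
  then show "((\<lambda>s. F (y(l := y l + s))) has_real_derivative 0) (at 0)" by simp
qed

lemma hyperplane_pd2_zero:
  assumes "\<And>x. x n = 0 \<Longrightarrow> F x = 0" "l \<noteq> n" "m \<noteq> n" "y n = 0"
  shows "pd m (pd l F) y = 0"
proof (rule hyperplane_pd_zero[of n _ m])
  show "\<And>x. x n = 0 \<Longrightarrow> pd l F x = 0" using hyperplane_pd_zero[of n F l] assms(1,2) by blast
qed (use assms in auto)

definition tan_sq :: "nat \<Rightarrow> (nat \<Rightarrow> real) \<Rightarrow> real" where
  "tan_sq n x = (\<Sum>j=1..n-1. x j * x j)"

definition tan_lap :: "nat \<Rightarrow> ((nat \<Rightarrow> real) \<Rightarrow> real) \<Rightarrow> (nat \<Rightarrow> real) \<Rightarrow> real" where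
  "tan_lap n f x = (\<Sum>i=1..n-1. pd i (pd i f) x)"

lemma pd_tan_sq: "i \<in> {1..n-1} \<Longrightarrow> pd i (tan_sq n) = (\<lambda>x. 2 * x i)"
  unfolding tan_sq_def[abs_def] by (simp add: fun_eq_iff sum_distrib_left[symmetric])

lemma tan_lap_tan_sq_mult:
  assumes g: "is_poly g"
  shows "tan_lap n (\<lambda>x. tan_sq n x * g x) x
     = tan_sq n x * tan_lap n g x + 4 * (\<Sum>i=1..n-1. x i * pd i g x) + 2 * real (n - 1) * g x"
proof -
  have sq: "is_poly (tan_sq n)" unfolding tan_sq_def[abs_def] by simp
  have "pd i (pd i (\<lambda>x. tan_sq n x * g x)) x = 2 * g x + 4 * (x i * pd i g x) + tan_sq n x * pd i (pd i g) x"
    if "i \<in> {1..n-1}" for i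
    using that g sq by (simp add: pd_tan_sq algebra_simps)
  then have "tan_lap n (\<lambda>x. tan_sq n x * g x) x
      = (\<Sum>i=1..n-1. 2 * g x + 4 * (x i * pd i g x) + tan_sq n x * pd i (pd i g) x)"
    unfolding tan_lap_def by (rule sum.cong[OF refl])
  also have "\<dots> = tan_sq n x * tan_lap n g x + 4 * (\<Sum>i=1..n-1. x i * pd i g x) + 2 * real (n - 1) * g x"
    by (simp add: tan_lap_def sum.distrib sum_distrib_left)
  finally show ?thesis .
qed

lemma tangential_descent_step:
  assumes n_pos: "n \<ge> 1" and fp: "f \<in> poly_in {1..n}" and fh: "homog 0 r f" and r: "r \<ge> 2"
    and f_indep: "\<And>x. f x = f (x(n := 0))"
    and eq: "\<And>x. tan_sq n x * tan_lap n f x = - \<mu> * f x"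
  shows "tan_lap n f \<in> poly_in {1..n}" and "homog 0 (r - 2) (tan_lap n f)"
    and "\<And>x. tan_lap n f x = tan_lap n f (x(n := 0))"
    and "\<And>x. tan_sq n x * tan_lap n (tan_lap n f) x
               = - (\<mu> + 4 * real (r - 2) + 2 * real (n - 1)) * tan_lap n f x"
proof -
  define g where "g = tan_lap n f"
  have is_f: "is_poly f" using fp is_poly_def by blast
  have g_fun: "g = (\<lambda>x. \<Sum>i=1..n-1. pd i (pd i f) x)" unfolding g_def tan_lap_def[abs_def] ..
  show "tan_lap n f \<in> poly_in {1..n}" unfolding g_def[symmetric] g_fun using fp by auto
  then have gp: "g \<in> poly_in {1..n}" by (simp add: g_def)
  have "homog 2 r g" unfolding g_fun using homog_pd2[OF is_f fh] by (intro homog_sum)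
  then show gh: "homog 0 (r - 2) (tan_lap n f)" using homog_lower r by (simp add: g_def)
  show g_indep: "tan_lap n f x = tan_lap n f (x(n := 0))" for x
  proof -
    have "pd i (pd i f) x = pd i (pd i f) (x(n := 0))" if "i \<in> {1..n-1}" for i
    proof -
      have ni: "i \<noteq> n" using that n_pos by auto
      have "\<And>x. pd i f x = pd i f (x(n := 0))" using indep_pd[where F=f and m=n, OF f_indep ni] .
      then show ?thesis using indep_pd[where F="pd i f" and m=n] ni by blast
    qed
    then show ?thesis unfolding tan_lap_def by (intro sum.cong) auto
  qed
  have euler_g: "(\<Sum>i=1..n-1. y i * pd i g y) = real (r - 2) * g y" for y
  proof -
    have "(\<Sum>i=1..n. y i * pd i g y) = real (r - 2) * g y"
      using euler_identity[OF gp _ gh[folded g_def]] by simp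
    moreover have "pd n g y = 0" using indep_pd_normal[of g n y] g_indep by (simp add: g_def)
    ultimately show ?thesis using sum_split_last[OF n_pos, of "\<lambda>i. y i * pd i g y"] by simp
  qed
  have "(\<lambda>x. tan_sq n x * g x) = (\<lambda>x. - \<mu> * f x)"
    using eq unfolding g_def by (simp add: fun_eq_iff)
  then have "tan_lap n (\<lambda>x. tan_sq n x * g x) y = - \<mu> * g y" for y
    using is_f by (simp add: g_def tan_lap_def sum_distrib_left)
  then show "tan_sq n y * tan_lap n (tan_lap n f) y
      = - (\<mu> + 4 * real (r - 2) + 2 * real (n - 1)) * tan_lap n f y" for y
    using tan_lap_tan_sq_mult[of g n y] euler_g is_f unfolding g_def[symmetric]
    by (simp add: g_fun algebra_simps)
qed

(* By induction on the degree: \<Delta>' f satisfies an equation of the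
   same type, so it vanishes, and then so does f. *)
lemma tangential_descent:
  assumes n_pos: "n \<ge> 1"
  shows "f \<in> poly_in {1..n} \<Longrightarrow> homog 0 r f \<Longrightarrow> (\<And>x. f x = f (x(n := 0))) \<Longrightarrow> \<mu> > 0 \<Longrightarrow>
    (\<And>x. tan_sq n x * tan_lap n f x = - \<mu> * f x) \<Longrightarrow> f x = 0"
proof (induction r arbitrary: f \<mu> x rule: less_induct)
  case (less r)
  have lap_zero: "tan_lap n f y = 0" for y
  proof (cases "r < 2")
    case True
    have is_f: "is_poly f" using less.prems(1) is_poly_def by blast
    then have "is_poly (tan_lap n f)" unfolding tan_lap_def[abs_def] by simp
    moreover have "homog 2 r (tan_lap n f)"
      unfolding tan_lap_def[abs_def] using is_f less.prems(2) by (intro homog_sum homog_pd2)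
    ultimately show ?thesis using homog_negative_zero True by blast
  next
    case False
    then have "r \<ge> 2" by simp
    note step = tangential_descent_step[OF n_pos less.prems(1,2) this less.prems(3,5)]
    have pos: "\<mu> + 4 * real (r - 2) + 2 * real (n - 1) > 0" using less.prems(4) by simp
    show ?thesis by (rule less.IH[OF _ step(1-3) pos step(4)]) (use False in simp)
  qed
  then have "- \<mu> * f x = 0" using less.prems(5)[of x] by simp
  then show ?case using less.prems(4) by simp
qed

lemma pd_quadratic_form:
  assumes "\<And>j l. is_poly (B j l)"
  shows "pd i (\<lambda>x. \<Sum>j\<in>T. \<Sum>l\<in>T. x j * x l * B j l x) y
    = (if i \<in> T then (\<Sum>l\<in>T. y l * B i l y) + (\<Sum>j\<in>T. y j * B j i y) else 0) + (\<Sum>j\<in>T. \<Sum>l\<in>T. y j * y l * pd i (B j l) y)"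
proof (cases "finite T")
  case True
  have t: "pd i (\<lambda>x. x j * x l * B j l x) y = (if i = j then y l * B j l y else 0) + (if i = l then y j * B j l y else 0) + y j * y l * pd i (B j l) y" for j l
    using assms by (cases "i = j"; cases "i = l") (simp_all add: algebra_simps)
  have "pd i (\<lambda>x. \<Sum>j\<in>T. \<Sum>l\<in>T. x j * x l * B j l x) y = (\<Sum>j\<in>T. \<Sum>l\<in>T. pd i (\<lambda>x. x j * x l * B j l x) y)"
    using assms by simp
  also have "\<dots> = (\<Sum>j\<in>T. \<Sum>l\<in>T. (if i = j then y l * B j l y else 0)) + (\<Sum>j\<in>T. \<Sum>l\<in>T. (if i = l then y j * B j l y else 0))
       + (\<Sum>j\<in>T. \<Sum>l\<in>T. y j * y l * pd i (B j l) y)"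
    unfolding t by (simp only: sum.distrib)
  also have "(\<Sum>j\<in>T. \<Sum>l\<in>T. (if i = j then y l * B j l y else 0)) = (if i \<in> T then (\<Sum>l\<in>T. y l * B i l y) else 0)"
  proof -
    have "(\<Sum>j\<in>T. \<Sum>l\<in>T. (if i = j then y l * B j l y else 0)) = (\<Sum>j\<in>T. if i = j then (\<Sum>l\<in>T. y l * B j l y) else 0)"
      by (rule sum.cong) auto
    then show ?thesis using True by simp
  qed
  also have "(\<Sum>j\<in>T. \<Sum>l\<in>T. (if i = l then y j * B j l y else 0)) = (if i \<in> T then (\<Sum>j\<in>T. y j * B j i y) else 0)"
    using True by simp
  finally show ?thesis by simp
next
  case False then show ?thesis by simp
qed

(* The scalar identity behind the divergence of the Weyl tensor (N = n): the trace terms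
   cancel and the Cotton terms combine with the factor (n-3)/(n-2). *)
lemma divergence_coefficients:
  fixes N p q u v A B :: real assumes "N - 1 \<noteq> 0" "N - 2 \<noteq> 0"
  shows "(p - q - u / (N - 1) * A + v / (N - 1) * B) + 1 / (N - 2) * (q - p - (N - 2) / (N - 1) * (v * B - u * A))
     = (N - 3) / (N - 2) * (p - q)"
proof -
  have "1 / (N - 2) * (q - p - (N - 2) / (N - 1) * (v * B - u * A)) = (q - p) / (N - 2) - (v * B - u * A) / (N - 1)"
    using assms by (simp add: field_simps)
  moreover have "p - q + (q - p) / (N - 2) = (N - 3) / (N - 2) * (p - q)"
    using assms by (simp add: field_simps)
  moreover have "(v * B - u * A) / (N - 1) = v / (N - 1) * B - u / (N - 1) * A"
    by (simp add: diff_divide_distrib)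
  ultimately show ?thesis by linarith
qed

locale flat_homog_tensor =
  fixes n k :: nat and G :: "nat \<Rightarrow> nat \<Rightarrow> (nat \<Rightarrow> real) \<Rightarrow> real"
  assumes n4: "n \<ge> 4" and k1: "k \<ge> 1"
    and poly_G: "\<And>a b. G a b \<in> poly_in {1..n}"
    and symG: "\<And>a b. a \<in> {1..n} \<Longrightarrow> b \<in> {1..n} \<Longrightarrow> G a b = G b a"
    and trG: "\<And>x. (\<Sum>a=1..n. G a a x) = 0"
    and Gn: "\<And>a. a \<in> {1..n} \<Longrightarrow> G a n = (\<lambda>x. 0)"
    and weyl_G: "\<And>a b c d x. a \<in> {1..n} \<Longrightarrow> b \<in> {1..n} \<Longrightarrow> c \<in> {1..n} \<Longrightarrow> d \<in> {1..n} \<Longrightarrow> weyl n G a b c d x = 0"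
    and bd_pdn: "\<And>i j x. i \<in> {1..n-1} \<Longrightarrow> j \<in> {1..n-1} \<Longrightarrow> x n = 0 \<Longrightarrow> pd n (G i j) x = 0"
    and bd_radial: "\<And>i x. i \<in> {1..n-1} \<Longrightarrow> x n = 0 \<Longrightarrow> (\<Sum>j=1..n-1. x j * G i j x) = 0"
    and homG: "\<And>a b. homog 0 k (G a b)"
begin

lemma is_poly_G[simp]: "is_poly (G a b)" using poly_G is_poly_def by blast

definition divG :: "nat \<Rightarrow> (nat \<Rightarrow> real) \<Rightarrow> real" where
  "divG a = (\<lambda>x. \<Sum>e=1..n. pd e (G a e) x)"
definition div2G :: "(nat \<Rightarrow> real) \<Rightarrow> real" where
  "div2G = (\<lambda>x. \<Sum>e=1..n. pd e (divG e) x)"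
definition lap :: "((nat \<Rightarrow> real) \<Rightarrow> real) \<Rightarrow> (nat \<Rightarrow> real) \<Rightarrow> real" where
  "lap F = (\<lambda>x. \<Sum>e=1..n. pd e (pd e F) x)"
definition Sch :: "nat \<Rightarrow> nat \<Rightarrow> (nat \<Rightarrow> real) \<Rightarrow> real" where
  "Sch a c = (\<lambda>x. schouten n G a c x)"

lemma is_poly_divG[simp]: "is_poly (divG a)" unfolding divG_def by simp
lemma is_poly_div2G[simp]: "is_poly div2G" unfolding div2G_def by simp
lemma is_poly_lap[simp]: "is_poly F \<Longrightarrow> is_poly (lap F)" unfolding lap_def by simp

lemma n_minus_nonzero: "real n - 1 \<noteq> 0" "real n - 2 \<noteq> 0" "real n - 3 \<noteq> 0" using n4 by auto

lemma Sch_eq: "Sch a c = (\<lambda>x. pd c (divG a) x + pd a (divG c) x - lap (G a c) x - div2G x / (real n - 1) * kron a c)"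
proof -
  have 1: "pd c (divG a) x = (\<Sum>e=1..n. pd c (pd e (G a e)) x)" for c a x unfolding divG_def by simp
  have 2: "div2G x = (\<Sum>e=1..n. \<Sum>f=1..n. pd e (pd f (G e f)) x)" for x unfolding div2G_def divG_def by simp
  show ?thesis unfolding Sch_def schouten_def 1 2 lap_def kron_def by (simp add: fun_eq_iff)
qed

lemma is_poly_Sch[simp]: "is_poly (Sch a c)" unfolding Sch_eq by simp

lemma Sch_sym: "a \<in> {1..n} \<Longrightarrow> c \<in> {1..n} \<Longrightarrow> Sch a c = Sch c a"
proof -
  assume "a \<in> {1..n}" "c \<in> {1..n}"
  then have "G a c = G c a" by (rule symG)
  then show ?thesis unfolding Sch_eq by (simp add: kron_sym add.commute)
qed

lemma pd_Sch: "pd b (Sch a c) = (\<lambda>x. pd b (pd c (divG a)) x + pd b (pd a (divG c)) x - pd b (lap (G a c)) x - pd b div2G x / (real n - 1) * kron a c)"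
  unfolding Sch_eq by simp

lemma pd_lap: "is_poly F \<Longrightarrow> pd b (lap F) = lap (pd b F)"
  unfolding lap_def by (simp add: pd_comm[of "pd _ F"] pd_comm[of F])

lemma lap_divG: "lap (divG a) x = (\<Sum>d=1..n. pd d (lap (G a d)) x)"
proof -
  have "lap (divG a) x = (\<Sum>e=1..n. \<Sum>d=1..n. pd e (pd e (pd d (G a d))) x)"
    unfolding lap_def divG_def by simp
  also have "\<dots> = (\<Sum>d=1..n. \<Sum>e=1..n. pd e (pd e (pd d (G a d))) x)" by (rule sum.swap)
  also have "\<dots> = (\<Sum>d=1..n. pd d (lap (G a d)) x)"
    unfolding pd_lap[OF is_poly_G] unfolding lap_def
    by (simp add: pd_comm[of "G _ _"] pd_comm[of "pd _ (G _ _)"])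
  finally show ?thesis .
qed

lemma div_Sch: "a \<in> {1..n} \<Longrightarrow> (\<Sum>d=1..n. pd d (Sch a d) x) = (1 - 1 / (real n - 1)) * pd a div2G x"
proof -
  assume a: "a \<in> {1..n}"
  have s1: "(\<Sum>d=1..n. pd d (pd d (divG a)) x) = lap (divG a) x" unfolding lap_def ..
  have s2: "(\<Sum>d=1..n. pd d (pd a (divG d)) x) = pd a div2G x"
    unfolding div2G_def by (simp add: pd_comm[of "divG _"])
  have s4: "(\<Sum>d=1..n. pd d div2G x / (real n - 1) * kron a d) = pd a div2G x / (real n - 1)"
    using a by (simp add: sum_divide_distrib[symmetric] sum_kron)
  have "(\<Sum>d=1..n. pd d (Sch a d) x) = (\<Sum>d=1..n. pd d (pd d (divG a)) x) + (\<Sum>d=1..n. pd d (pd a (divG d)) x)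
     - (\<Sum>d=1..n. pd d (lap (G a d)) x) - (\<Sum>d=1..n. pd d div2G x / (real n - 1) * kron a d)"
    unfolding pd_Sch by (simp add: sum.distrib sum_subtractf)
  also have "\<dots> = (1 - 1 / (real n - 1)) * pd a div2G x"
    unfolding s1 s2 s4 lap_divG by (simp add: algebra_simps)
  finally show ?thesis .
qed

lemma weyl_fun: "(\<lambda>x. weyl n G a b c d x) = (\<lambda>x. pd b (pd d (G a c)) x - pd b (pd c (G a d)) x + pd a (pd c (G b d)) x - pd a (pd d (G b c)) x
   + 1 / (real n - 2) * (Sch a c x * kron b d - Sch a d x * kron b c + Sch b d x * kron a c - Sch b c x * kron a d))"
  by (simp add: weyl_def Sch_def kron_def fun_eq_iff)

lemma weyl_div_second_derivs:
  "(\<Sum>d=1..n. pd d (pd b (pd d (G a c))) x) - (\<Sum>d=1..n. pd d (pd b (pd c (G a d))) x)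
     + (\<Sum>d=1..n. pd d (pd a (pd c (G b d))) x) - (\<Sum>d=1..n. pd d (pd a (pd d (G b c))) x)
   = pd a (Sch b c) x - pd b (Sch a c) x
     - pd b div2G x / (real n - 1) * kron a c + pd a div2G x / (real n - 1) * kron b c"
proof -
  have S1: "(\<Sum>d=1..n. pd d (pd b (pd d (G a c))) x) = pd b (lap (G a c)) x"
    unfolding lap_def by (simp add: pd_comm[of "pd _ (G _ _)"])
  have S4: "(\<Sum>d=1..n. pd d (pd a (pd d (G b c))) x) = pd a (lap (G b c)) x"
    unfolding lap_def by (simp add: pd_comm[of "pd _ (G _ _)"])
  have S2: "(\<Sum>d=1..n. pd d (pd b (pd c (G a d))) x) = pd b (pd c (divG a)) x"
    unfolding divG_def by (simp, rule sum.cong[OF refl], metis pd3_comm is_poly_G)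
  have S3: "(\<Sum>d=1..n. pd d (pd a (pd c (G b d))) x) = pd a (pd c (divG b)) x"
    unfolding divG_def by (simp, rule sum.cong[OF refl], metis pd3_comm is_poly_G)
  have "pd b (pd a (divG c)) x = pd a (pd b (divG c)) x" by (simp add: pd_comm)
  then show ?thesis unfolding S1 S2 S3 S4 pd_Sch by simp
qed

lemma weyl_div_schouten:
  assumes a: "a \<in> {1..n}" and b: "b \<in> {1..n}"
  shows "(\<Sum>d=1..n. pd d (Sch a c) x * kron b d) - (\<Sum>d=1..n. pd d (Sch a d) x * kron b c)
      + (\<Sum>d=1..n. pd d (Sch b d) x * kron a c) - (\<Sum>d=1..n. pd d (Sch b c) x * kron a d)
    = pd b (Sch a c) x - pd a (Sch b c) x
      - (real n - 2) / (real n - 1) * (pd a div2G x * kron b c - pd b div2G x * kron a c)"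
proof -
  have frac: "1 - 1 / (real n - 1) = (real n - 2) / (real n - 1)" using n_minus_nonzero by (simp add: field_simps)
  have "(\<Sum>d=1..n. pd d (Sch a d) x * kron b c) = (real n - 2) / (real n - 1) * pd a div2G x * kron b c"
    using div_Sch[OF a, of x] unfolding frac by (simp add: sum_distrib_right[symmetric])
  moreover have "(\<Sum>d=1..n. pd d (Sch b d) x * kron a c) = (real n - 2) / (real n - 1) * pd b div2G x * kron a c"
    using div_Sch[OF b, of x] unfolding frac by (simp add: sum_distrib_right[symmetric])
  moreover have "(\<Sum>d=1..n. pd d (Sch a c) x * kron b d) = pd b (Sch a c) x" using b by (simp add: sum_kron)
  moreover have "(\<Sum>d=1..n. pd d (Sch b c) x * kron a d) = pd a (Sch b c) x" using a by (simp add: sum_kron)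
  ultimately show ?thesis by (simp add: algebra_simps)
qed

lemma weyl_divergence:
  assumes a: "a \<in> {1..n}" and b: "b \<in> {1..n}"
  shows "(\<Sum>d=1..n. pd d (\<lambda>x. weyl n G a b c d x) x)
    = (real n - 3) / (real n - 2) * (pd a (Sch b c) x - pd b (Sch a c) x)"
proof -
  let ?T = "\<lambda>d. pd d (pd b (pd d (G a c))) x - pd d (pd b (pd c (G a d))) x
    + pd d (pd a (pd c (G b d))) x - pd d (pd a (pd d (G b c))) x
    + 1 / (real n - 2) * (pd d (Sch a c) x * kron b d - pd d (Sch a d) x * kron b c
        + pd d (Sch b d) x * kron a c - pd d (Sch b c) x * kron a d)"
  have "pd d (\<lambda>x. weyl n G a b c d x) x = ?T d" for d
    unfolding weyl_fun by simp
  then have "(\<Sum>d=1..n. pd d (\<lambda>x. weyl n G a b c d x) x) = (\<Sum>d=1..n. ?T d)" by simp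
  also have "\<dots> = ((\<Sum>d=1..n. pd d (pd b (pd d (G a c))) x) - (\<Sum>d=1..n. pd d (pd b (pd c (G a d))) x)
     + (\<Sum>d=1..n. pd d (pd a (pd c (G b d))) x) - (\<Sum>d=1..n. pd d (pd a (pd d (G b c))) x))
     + 1 / (real n - 2) * ((\<Sum>d=1..n. pd d (Sch a c) x * kron b d) - (\<Sum>d=1..n. pd d (Sch a d) x * kron b c)
        + (\<Sum>d=1..n. pd d (Sch b d) x * kron a c) - (\<Sum>d=1..n. pd d (Sch b c) x * kron a d))"
    by (simp only: sum.distrib sum_subtractf sum_distrib_left[symmetric])
  also have "\<dots> = (real n - 3) / (real n - 2) * (pd a (Sch b c) x - pd b (Sch a c) x)"
    unfolding weyl_div_second_derivs weyl_div_schouten[OF a b] by (rule divergence_coefficients[OF n_minus_nonzero(1,2)])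
  finally show ?thesis .
qed

(* Since n \<ge> 4, the vanishing of the Weyl tensor implies that the Cotton tensor
   \<partial>_b A_ac - \<partial>_a A_bc vanishes. *)
lemma Sch_cotton:
  assumes a: "a \<in> {1..n}" and b: "b \<in> {1..n}" and c: "c \<in> {1..n}"
  shows "pd b (Sch a c) x = pd a (Sch b c) x"
proof -
  have "(\<Sum>d=1..n. pd d (\<lambda>x. weyl n G a b c d x) x) = 0"
    using weyl_G[OF a b c] by (simp add: fun_eq_iff)
  then show ?thesis unfolding weyl_divergence[OF a b] using n_minus_nonzero by simp
qed

lemma poly_G_pd[simp]: "pd a (G b c) \<in> poly_in {1..n}" using poly_G by simp

lemma euler_bd:
  assumes "F \<in> poly_in {1..n}" "homog 0 r F" "y n = 0"
  shows "(\<Sum>j=1..n-1. y j * pd j F y) = real r * F y"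
  using euler_identity[OF assms(1) _ assms(2), of y] sum_split_last[of n "\<lambda>j. y j * pd j F y"] n4 assms(3) by simp

lemma homog_pd_G: "homog 0 (k - 1) (pd a (G b c))" 
  using homog_lower[OF homog_pd[OF is_poly_G homG], of a] k1 by simp

definition Gx :: "nat \<Rightarrow> (nat \<Rightarrow> real) \<Rightarrow> real" where
  "Gx i = (\<lambda>x. \<Sum>j=1..n-1. x j * G i j x)"


lemma pd_Gx: "l \<in> {1..n-1} \<Longrightarrow> pd l (Gx i) x = G i l x + (\<Sum>j=1..n-1. x j * pd l (G i j) x)"
proof -
  assume l: "l \<in> {1..n-1}"
  have "pd l (Gx i) x = (\<Sum>j=1..n-1. (if l = j then 1 else 0) * G i j x + x j * pd l (G i j) x)"
    unfolding Gx_def by simp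
  also have "\<dots> = G i l x + (\<Sum>j=1..n-1. x j * pd l (G i j) x)"
    using l by (simp add: sum.distrib)
  finally show ?thesis .
qed

lemma pd2_Gx: "l \<in> {1..n-1} \<Longrightarrow> m \<in> {1..n-1} \<Longrightarrow>
   pd m (pd l (Gx i)) x = pd m (G i l) x + pd l (G i m) x + (\<Sum>j=1..n-1. x j * pd m (pd l (G i j)) x)"
proof -
  assume l: "l \<in> {1..n-1}" and m: "m \<in> {1..n-1}"
  have e: "pd l (Gx i) = (\<lambda>x. G i l x + (\<Sum>j=1..n-1. x j * pd l (G i j) x))" using pd_Gx[OF l] by auto
  have "pd m (pd l (Gx i)) x = pd m (G i l) x + (\<Sum>j=1..n-1. (if m = j then 1 else 0) * pd l (G i j) x + x j * pd m (pd l (G i j)) x)"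
    unfolding e by simp
  also have "\<dots> = pd m (G i l) x + pd l (G i m) x + (\<Sum>j=1..n-1. x j * pd m (pd l (G i j)) x)"
    using m by (simp add: sum.distrib)
  finally show ?thesis .
qed

lemma Gx_bd: "i \<in> {1..n-1} \<Longrightarrow> x n = 0 \<Longrightarrow> Gx i x = 0" unfolding Gx_def using bd_radial by simp

lemma Gx_pd_bd: "i \<in> {1..n-1} \<Longrightarrow> l \<in> {1..n-1} \<Longrightarrow> y n = 0 \<Longrightarrow> (\<Sum>j=1..n-1. y j * pd l (G i j) y) = - G i l y"
proof -
  assume i: "i \<in> {1..n-1}" and l: "l \<in> {1..n-1}" and y: "y n = 0"
  have "pd l (Gx i) y = 0" by (rule hyperplane_pd_zero[of n]) (use i l y Gx_bd in auto)
  then show ?thesis using pd_Gx[OF l] by simp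
qed

lemma Gx_pd2_bd: "i \<in> {1..n-1} \<Longrightarrow> l \<in> {1..n-1} \<Longrightarrow> m \<in> {1..n-1} \<Longrightarrow> y n = 0 \<Longrightarrow>
   (\<Sum>j=1..n-1. y j * pd m (pd l (G i j)) y) = - pd m (G i l) y - pd l (G i m) y"
proof -
  assume i: "i \<in> {1..n-1}" and l: "l \<in> {1..n-1}" and m: "m \<in> {1..n-1}" and y: "y n = 0"
  have "pd m (pd l (Gx i)) y = 0" by (rule hyperplane_pd2_zero[of n]) (use i l m y Gx_bd in auto)
  then show ?thesis using pd2_Gx[OF l m] by simp
qed

lemma symG_tan: "a \<in> {1..n-1} \<Longrightarrow> b \<in> {1..n-1} \<Longrightarrow> G a b = G b a"
  using symG by auto

lemma euler_G_bd: "y n = 0 \<Longrightarrow> (\<Sum>l=1..n-1. y l * pd l (G a b) y) = real k * G a b y"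
  using euler_bd[OF poly_G homG] by simp

lemma euler_pdG_bd: "y n = 0 \<Longrightarrow> (\<Sum>l=1..n-1. y l * pd l (pd j (G a b)) y) = (real k - 1) * pd j (G a b) y"
  using euler_bd[OF poly_G_pd homog_pd_G] k1 by (simp add: of_nat_diff)

lemma contract_jl_Giq_bd:
  assumes y: "y n = 0"
  shows "(\<Sum>j=1..n-1. \<Sum>l=1..n-1. y j * y l * pd j (pd l (G i q)) y) = (real k - 1) * real k * G i q y"
proof -
  have "(\<Sum>j=1..n-1. \<Sum>l=1..n-1. y j * y l * pd j (pd l (G i q)) y)
      = (\<Sum>j=1..n-1. y j * (\<Sum>l=1..n-1. y l * pd l (pd j (G i q)) y))"
    by (simp add: sum_distrib_left pd_comm[of "G i q"] mult.assoc)
  also have "\<dots> = (\<Sum>j=1..n-1. y j * ((real k - 1) * pd j (G i q) y))"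
    using euler_pdG_bd[where y=y, OF y] by simp
  also have "\<dots> = (real k - 1) * (\<Sum>j=1..n-1. y j * pd j (G i q) y)"
    by (simp add: sum_distrib_left mult.left_commute)
  also have "\<dots> = (real k - 1) * real k * G i q y"
    using euler_G_bd[where y=y, OF y] by simp
  finally show ?thesis .
qed

lemma contract_jq_Gil_bd:
  assumes i: "i \<in> {1..n-1}" and q: "q \<in> {1..n-1}" and y: "y n = 0"
  shows "(\<Sum>j=1..n-1. \<Sum>l=1..n-1. y j * y l * pd j (pd q (G i l)) y) = - real k * G i q y + G i q y"
proof -
  have "(\<Sum>j=1..n-1. \<Sum>l=1..n-1. y j * y l * pd j (pd q (G i l)) y)
      = (\<Sum>j=1..n-1. y j * (\<Sum>l=1..n-1. y l * pd j (pd q (G i l)) y))"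
    by (simp add: sum_distrib_left mult.assoc)
  also have "\<dots> = (\<Sum>j=1..n-1. y j * (- pd j (G i q) y - pd q (G i j) y))"
    by (rule sum.cong[OF refl]) (use Gx_pd2_bd[where y=y, OF i q _ y] in simp)
  also have "\<dots> = - (\<Sum>j=1..n-1. y j * pd j (G i q) y) - (\<Sum>j=1..n-1. y j * pd q (G i j) y)"
    by (simp add: algebra_simps sum_subtractf sum_negf)
  also have "\<dots> = - real k * G i q y + G i q y"
    using euler_G_bd[where y=y, OF y] Gx_pd_bd[where y=y, OF i q y] by simp
  finally show ?thesis .
qed

lemma contract_iq_Gjl_bd:
  assumes i: "i \<in> {1..n-1}" and q: "q \<in> {1..n-1}" and y: "y n = 0"
  shows "(\<Sum>j=1..n-1. \<Sum>l=1..n-1. y j * y l * pd i (pd q (G j l)) y) = 2 * G i q y"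
proof -
  have "(\<Sum>j=1..n-1. \<Sum>l=1..n-1. y j * y l * pd i (pd q (G j l)) y)
      = (\<Sum>j=1..n-1. y j * (\<Sum>l=1..n-1. y l * pd i (pd q (G j l)) y))"
    by (simp add: sum_distrib_left mult.assoc)
  also have "\<dots> = (\<Sum>j=1..n-1. y j * (- pd i (G j q) y - pd q (G j i) y))"
    by (rule sum.cong[OF refl]) (use Gx_pd2_bd[where y=y, OF _ q i y] in simp)
  also have "\<dots> = (\<Sum>j=1..n-1. y j * (- pd i (G q j) y - pd q (G i j) y))"
    by (rule sum.cong[OF refl]) (use symG_tan i q in simp)
  also have "\<dots> = - (\<Sum>j=1..n-1. y j * pd i (G q j) y) - (\<Sum>j=1..n-1. y j * pd q (G i j) y)"
    by (simp add: algebra_simps sum_subtractf sum_negf)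
  also have "\<dots> = G q i y + G i q y"
    using Gx_pd_bd[where y=y, OF q i y] Gx_pd_bd[where y=y, OF i q y] by simp
  also have "\<dots> = 2 * G i q y" using symG_tan[OF i q] by simp
  finally show ?thesis .
qed

lemma contract_il_Gjq_bd:
  assumes i: "i \<in> {1..n-1}" and q: "q \<in> {1..n-1}" and y: "y n = 0"
  shows "(\<Sum>j=1..n-1. \<Sum>l=1..n-1. y j * y l * pd i (pd l (G j q)) y) = G i q y - real k * G i q y"
proof -
  have "(\<Sum>j=1..n-1. \<Sum>l=1..n-1. y j * y l * pd i (pd l (G j q)) y)
      = (\<Sum>l=1..n-1. \<Sum>j=1..n-1. y j * y l * pd i (pd l (G j q)) y)"
    by (rule sum.swap)
  also have "\<dots> = (\<Sum>l=1..n-1. y l * (\<Sum>j=1..n-1. y j * pd i (pd l (G q j)) y))"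
    by (rule sum.cong[OF refl]) (use symG_tan q in \<open>simp add: sum_distrib_left mult_ac\<close>)
  also have "\<dots> = (\<Sum>l=1..n-1. y l * (- pd i (G q l) y - pd l (G q i) y))"
    by (rule sum.cong[OF refl]) (use Gx_pd2_bd[where y=y, OF q _ i y] in simp)
  also have "\<dots> = - (\<Sum>l=1..n-1. y l * pd i (G q l) y) - (\<Sum>l=1..n-1. y l * pd l (G q i) y)"
    by (simp add: algebra_simps sum_subtractf sum_negf)
  also have "\<dots> = G q i y - real k * G q i y"
    using euler_G_bd[where y=y, OF y] Gx_pd_bd[where y=y, OF q i y] by simp
  also have "\<dots> = G i q y - real k * G i q y" using symG_tan[OF i q] by simp
  finally show ?thesis .
qed

lemma contracted_second_derivs_bd:
  assumes i: "i \<in> {1..n-1}" and q: "q \<in> {1..n-1}" and y: "y n = 0"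
  shows "(\<Sum>j=1..n-1. \<Sum>l=1..n-1. y j * y l * (pd j (pd l (G i q)) y - pd j (pd q (G i l)) y
            + pd i (pd q (G j l)) y - pd i (pd l (G j q)) y)) = real k * (real k + 1) * G i q y"
proof -
  have "(\<Sum>j=1..n-1. \<Sum>l=1..n-1. y j * y l * (pd j (pd l (G i q)) y - pd j (pd q (G i l)) y
            + pd i (pd q (G j l)) y - pd i (pd l (G j q)) y))
      = (\<Sum>j=1..n-1. \<Sum>l=1..n-1. y j * y l * pd j (pd l (G i q)) y)
        - (\<Sum>j=1..n-1. \<Sum>l=1..n-1. y j * y l * pd j (pd q (G i l)) y)
        + (\<Sum>j=1..n-1. \<Sum>l=1..n-1. y j * y l * pd i (pd q (G j l)) y)
        - (\<Sum>j=1..n-1. \<Sum>l=1..n-1. y j * y l * pd i (pd l (G j q)) y)"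
    by (simp add: algebra_simps sum.distrib sum_subtractf)
  also have "\<dots> = real k * (real k + 1) * G i q y"
    unfolding contract_jl_Giq_bd[where y=y, OF y] contract_jq_Gil_bd[where y=y, OF i q y] contract_iq_Gjl_bd[where y=y, OF i q y]
      contract_il_Gjq_bd[where y=y, OF i q y]
    by (simp add: algebra_simps)
  finally show ?thesis .
qed

definition Sch_x :: "nat \<Rightarrow> (nat \<Rightarrow> real) \<Rightarrow> real" where "Sch_x i y = (\<Sum>l=1..n-1. y l * Sch i l y)"
definition Sch_xx :: "(nat \<Rightarrow> real) \<Rightarrow> real" where "Sch_xx y = (\<Sum>j=1..n-1. \<Sum>l=1..n-1. y j * y l * Sch j l y)"

lemma Sch_sym_tan: "a \<in> {1..n-1} \<Longrightarrow> c \<in> {1..n-1} \<Longrightarrow> Sch a c = Sch c a"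
  using Sch_sym by auto

lemma weyl_tangential:
  assumes i: "i \<in> {1..n-1}" and j: "j \<in> {1..n-1}" and q: "q \<in> {1..n-1}" and l: "l \<in> {1..n-1}"
  shows "pd j (pd l (G i q)) y - pd j (pd q (G i l)) y + pd i (pd q (G j l)) y - pd i (pd l (G j q)) y
    = - 1 / (real n - 2) * (Sch i q y * kron j l - Sch i l y * kron j q + Sch j l y * kron i q - Sch j q y * kron i l)"
proof -
  have "weyl n G i j q l y = 0" by (rule weyl_G) (use i j q l in auto)
  then show ?thesis unfolding weyl_def Sch_def kron_def by (simp add: algebra_simps)
qed

lemma contract_kron_terms:
  assumes i: "i \<in> {1..n-1}" and q: "q \<in> {1..n-1}"
  shows "(\<Sum>j=1..n-1. \<Sum>l=1..n-1. y j * y l *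
      (Sch i q y * kron j l - Sch i l y * kron j q + Sch j l y * kron i q - Sch j q y * kron i l))
    = tan_sq n y * Sch i q y - y q * Sch_x i y + kron i q * Sch_xx y - y i * Sch_x q y"
proof -
  define T where "T = {1..n-1}"
  have fT: "finite T" unfolding T_def by simp
  have e1: "(\<Sum>j\<in>T. \<Sum>l\<in>T. y j * y l * (Sch i q y * kron j l)) = tan_sq n y * Sch i q y"
  proof -
    have "(\<Sum>j\<in>T. \<Sum>l\<in>T. y j * y l * (Sch i q y * kron j l)) = (\<Sum>j\<in>T. \<Sum>l\<in>T. (y j * y l * Sch i q y) * kron j l)"
      by (simp add: mult_ac)
    also have "\<dots> = (\<Sum>j\<in>T. y j * y j * Sch i q y)" using fT by (simp add: sum_kron)
    finally show ?thesis unfolding tan_sq_def T_def by (simp add: sum_distrib_right)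
  qed
  have e2: "(\<Sum>j\<in>T. \<Sum>l\<in>T. y j * y l * (Sch i l y * kron j q)) = y q * Sch_x i y"
  proof -
    have "(\<Sum>j\<in>T. \<Sum>l\<in>T. y j * y l * (Sch i l y * kron j q)) = (\<Sum>l\<in>T. \<Sum>j\<in>T. (y j * y l * Sch i l y) * kron j q)"
      by (subst sum.swap) (simp add: mult_ac)
    also have "\<dots> = (\<Sum>l\<in>T. y q * y l * Sch i l y)" using fT q by (simp add: sum_kron' T_def)
    finally show ?thesis unfolding Sch_x_def T_def by (simp add: sum_distrib_left mult_ac)
  qed
  have e3: "(\<Sum>j\<in>T. \<Sum>l\<in>T. y j * y l * (Sch j l y * kron i q)) = kron i q * Sch_xx y"
    unfolding Sch_xx_def T_def by (simp add: sum_distrib_left sum_distrib_right mult_ac)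
  have e4: "(\<Sum>j\<in>T. \<Sum>l\<in>T. y j * y l * (Sch j q y * kron i l)) = y i * Sch_x q y"
  proof -
    have "(\<Sum>j\<in>T. \<Sum>l\<in>T. y j * y l * (Sch j q y * kron i l)) = (\<Sum>j\<in>T. \<Sum>l\<in>T. (y j * y l * Sch j q y) * kron i l)"
      by (simp add: mult_ac)
    also have "\<dots> = (\<Sum>j\<in>T. y j * y i * Sch j q y)" using fT i by (simp add: sum_kron T_def)
    also have "\<dots> = (\<Sum>j\<in>T. y i * (y j * Sch q j y))"
      by (rule sum.cong[OF refl]) (use Sch_sym_tan q in \<open>auto simp: T_def\<close>)
    finally show ?thesis unfolding Sch_x_def T_def by (simp add: sum_distrib_left)
  qed
  have "(\<Sum>j\<in>T. \<Sum>l\<in>T. y j * y l *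
      (Sch i q y * kron j l - Sch i l y * kron j q + Sch j l y * kron i q - Sch j q y * kron i l))
    = (\<Sum>j\<in>T. \<Sum>l\<in>T. y j * y l * (Sch i q y * kron j l))
       - (\<Sum>j\<in>T. \<Sum>l\<in>T. y j * y l * (Sch i l y * kron j q)) + (\<Sum>j\<in>T. \<Sum>l\<in>T. y j * y l * (Sch j l y * kron i q))
       - (\<Sum>j\<in>T. \<Sum>l\<in>T. y j * y l * (Sch j q y * kron i l))"
    by (simp only: right_diff_distrib distrib_left sum.distrib sum_subtractf)
  also have "\<dots> = tan_sq n y * Sch i q y - y q * Sch_x i y + kron i q * Sch_xx y - y i * Sch_x q y"
    unfolding e1 e2 e3 e4 ..
  finally show ?thesis unfolding T_def .
qed

(* On the boundary, G is determined by the Schouten tensor: contract the tangential Weyl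
   equations Z_ijql = 0 with y_j y_l. *)
lemma G_via_Sch_bd:
  assumes i: "i \<in> {1..n-1}" and q: "q \<in> {1..n-1}" and y: "y n = 0"
  shows "real k * (real k + 1) * G i q y
    = - 1 / (real n - 2) * (tan_sq n y * Sch i q y - y q * Sch_x i y + kron i q * Sch_xx y - y i * Sch_x q y)"
proof -
  have "real k * (real k + 1) * G i q y = (\<Sum>j=1..n-1. \<Sum>l=1..n-1. y j * y l *
      (pd j (pd l (G i q)) y - pd j (pd q (G i l)) y + pd i (pd q (G j l)) y - pd i (pd l (G j q)) y))"
    using contracted_second_derivs_bd[where y=y, OF i q y] by simp
  also have "\<dots> = (\<Sum>j=1..n-1. \<Sum>l=1..n-1. - 1 / (real n - 2) * (y j * y l *
      (Sch i q y * kron j l - Sch i l y * kron j q + Sch j l y * kron i q - Sch j q y * kron i l)))"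
    by (intro sum.cong refl) (use weyl_tangential i q in simp)
  also have "\<dots> = - 1 / (real n - 2) * (\<Sum>j=1..n-1. \<Sum>l=1..n-1. y j * y l *
      (Sch i q y * kron j l - Sch i l y * kron j q + Sch j l y * kron i q - Sch j q y * kron i l))"
    by (simp only: sum_distrib_left)
  finally show ?thesis unfolding contract_kron_terms[OF i q] .
qed

(* The trace identity on the boundary, obtained from tr G = 0 via G_via_Sch_bd. *)
lemma trG_tan: "(\<Sum>i=1..n-1. G i i x) = 0"
proof -
  have "G n n x = 0" using Gn[of n] n4 by simp
  then show ?thesis using trG[of x] sum_split_last[of n "\<lambda>i. G i i x"] n4 by simp
qed

lemma trace_identity_bd:
  assumes y: "y n = 0"
  shows "tan_sq n y * (\<Sum>i=1..n-1. Sch i i y) + (real n - 3) * Sch_xx y = 0"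
proof -
  define T where "T = {1..n-1}"
  have "0 = real k * (real k + 1) * (\<Sum>i\<in>T. G i i y)" using trG_tan unfolding T_def by simp
  also have "\<dots> = (\<Sum>i\<in>T. real k * (real k + 1) * G i i y)" by (simp add: sum_distrib_left)
  also have "\<dots> = (\<Sum>i\<in>T. - 1 / (real n - 2) * (tan_sq n y * Sch i i y - y i * Sch_x i y + Sch_xx y - y i * Sch_x i y))"
    by (rule sum.cong[OF refl]) (use G_via_Sch_bd y in \<open>simp add: T_def\<close>)
  also have "\<dots> = (\<Sum>i\<in>T. - 1 / (real n - 2) * (tan_sq n y * Sch i i y + Sch_xx y - 2 * (y i * Sch_x i y)))"
    by (rule sum.cong[OF refl]) (simp add: algebra_simps)
  also have "\<dots> = - 1 / (real n - 2) * (\<Sum>i\<in>T. tan_sq n y * Sch i i y + Sch_xx y - 2 * (y i * Sch_x i y))"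
    by (simp only: sum_distrib_left)
  also have "(\<Sum>i\<in>T. tan_sq n y * Sch i i y + Sch_xx y - 2 * (y i * Sch_x i y)) = tan_sq n y * (\<Sum>i\<in>T. Sch i i y) + real (card T) * Sch_xx y - 2 * (\<Sum>i\<in>T. y i * Sch_x i y)"
    by (simp add: sum.distrib sum_subtractf sum_distrib_left)
  also have "real (card T) = real n - 1" unfolding T_def using n4 by (simp add: of_nat_diff)
  also have "(\<Sum>i\<in>T. y i * Sch_x i y) = Sch_xx y"
    unfolding Sch_x_def Sch_xx_def T_def by (simp add: sum_distrib_left mult_ac)
  finally have "0 = - 1 / (real n - 2) * (tan_sq n y * (\<Sum>i\<in>T. Sch i i y) + (real n - 3) * Sch_xx y)"
    by (simp add: algebra_simps)
  then show ?thesis using n_minus_nonzero unfolding T_def by simp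
qed


(* Degrees: A is homogeneous of degree k - 2, so it vanishes when k = 1. *)
lemma poly_Sch[simp]: "Sch a c \<in> poly_in {1..n}"
  unfolding Sch_eq divG_def div2G_def lap_def using poly_G by (simp add: poly_in_sum)

lemma homog_divG: "homog 1 k (divG a)" unfolding divG_def by (intro homog_sum) (simp add: homog_pd homG)
lemma homog_div2G: "homog 2 k div2G" unfolding div2G_def by (intro homog_sum) (metis homog_pd homog_divG is_poly_divG One_nat_def Suc_1)
lemma homog_lap: "homog 2 k (lap (G a c))" unfolding lap_def
  by (intro homog_sum) (metis homog_pd homG is_poly_G is_poly_pd One_nat_def Suc_1 Suc_eq_plus1)

lemma homog_Sch: "homog 2 k (Sch a c)"
proof -
  have 1: "homog 2 k (pd c (divG a))" for c a using homog_pd[OF is_poly_divG homog_divG] by (simp add: numeral_2_eq_2)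
  show ?thesis unfolding Sch_eq using 1 homog_div2G homog_lap by (intro homog_diff homog_add homog_multc homog_divc) auto
qed

lemma Sch_zero_deg1: "k = 1 \<Longrightarrow> Sch a c y = 0"
  using homog_negative_zero[OF is_poly_Sch homog_Sch] by simp

definition tr_Sch :: "(nat \<Rightarrow> real) \<Rightarrow> real" where "tr_Sch = (\<lambda>x. \<Sum>i=1..n-1. Sch i i x)"

lemma poly_tr_Sch[simp]: "tr_Sch \<in> poly_in {1..n}" unfolding tr_Sch_def by (rule poly_in_sum) (rule poly_Sch)

lemma euler2_bd:
  assumes F: "F \<in> poly_in {1..n}" and h: "homog 0 r F" and y: "y n = 0"
  shows "(\<Sum>j=1..n-1. \<Sum>l=1..n-1. y j * y l * pd j (pd l F) y) = (real r - 1) * real r * F y"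
proof -
  have pfF: "is_poly F" using F is_poly_def by blast
  have E: "(\<lambda>x. \<Sum>l=1..n. x l * pd l F x) = (\<lambda>x. real r * F x)"
    using euler_identity[OF F _ h] by (simp add: fun_eq_iff)
  have dE: "pd j (\<lambda>x. \<Sum>l=1..n. x l * pd l F x) y = pd j (\<lambda>x. real r * F x) y" for j unfolding E ..
  have E2: "pd j F y + (\<Sum>l=1..n. y l * pd j (pd l F) y) = real r * pd j F y" if "j \<in> {1..n-1}" for j
  proof -
    have "j \<le> n" using that by auto
    then show ?thesis using dE[of j] that pfF n4 by (simp add: sum.distrib)
  qed
  have E3: "(\<Sum>l=1..n-1. y l * pd j (pd l F) y) = (real r - 1) * pd j F y" if "j \<in> {1..n-1}" for j
    using E2[OF that] sum_split_last[of n "\<lambda>l. y l * pd j (pd l F) y"] n4 y by (simp add: algebra_simps)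
  have "(\<Sum>j=1..n-1. \<Sum>l=1..n-1. y j * y l * pd j (pd l F) y) = (\<Sum>j=1..n-1. y j * (\<Sum>l=1..n-1. y l * pd j (pd l F) y))"
    by (simp add: sum_distrib_left mult.assoc)
  also have "\<dots> = (\<Sum>j=1..n-1. y j * ((real r - 1) * pd j F y))"
    by (rule sum.cong[OF refl]) (use E3 in auto)
  also have "\<dots> = (real r - 1) * (\<Sum>j=1..n-1. y j * pd j F y)" by (simp add: sum_distrib_left mult_ac)
  also have "\<dots> = (real r - 1) * real r * F y" using euler_bd[where y=y, OF F h y] by simp
  finally show ?thesis .
qed

lemma pd_Sch_swap: "a \<in> {1..n} \<Longrightarrow> b \<in> {1..n} \<Longrightarrow> c \<in> {1..n} \<Longrightarrow> pd b (Sch a c) = pd a (Sch b c)"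
  using Sch_cotton by (simp add: fun_eq_iff)

lemma homog0_Sch: "k \<ge> 2 \<Longrightarrow> homog 0 (k - 2) (Sch a c)"
  using homog_lower[OF homog_Sch] by simp

lemma homog_tr_Sch: "k \<ge> 2 \<Longrightarrow> homog 0 (k - 2) tr_Sch"
  unfolding tr_Sch_def using homog0_Sch by (intro homog_sum) auto

(* First derivatives of the contractions of A; on the boundary \<partial>_i Sch_xx = k Sch_x i,
   by the Cotton identity and Euler's identity. *)
lemma Sch_xx_fun: "Sch_xx = (\<lambda>x. \<Sum>j=1..n-1. \<Sum>l=1..n-1. x j * x l * Sch j l x)"
  by (simp add: Sch_xx_def fun_eq_iff)

lemma Sch_x_fun: "Sch_x i = (\<lambda>x. \<Sum>l=1..n-1. x l * Sch i l x)"
  by (simp add: Sch_x_def fun_eq_iff)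

lemma is_poly_Sch_x[simp]: "is_poly (Sch_x i)" unfolding Sch_x_fun by simp
lemma is_poly_Sch_xx[simp]: "is_poly Sch_xx" unfolding Sch_xx_fun by simp

lemma pd_Sch_xx: "i \<in> {1..n-1} \<Longrightarrow> pd i Sch_xx = (\<lambda>x. 2 * Sch_x i x + (\<Sum>j=1..n-1. \<Sum>l=1..n-1. x j * x l * pd i (Sch j l) x))"
proof -
  assume i: "i \<in> {1..n-1}"
  have "(\<Sum>j=1..n-1. y j * Sch j i y) = Sch_x i y" for y
    unfolding Sch_x_def by (rule sum.cong[OF refl]) (use Sch_sym_tan i in auto)
  moreover have "pd i (\<lambda>x. \<Sum>j=1..n-1. \<Sum>l=1..n-1. x j * x l * Sch j l x) y
    = (if i \<in> {1..n-1} then (\<Sum>l=1..n-1. y l * Sch i l y) + (\<Sum>j=1..n-1. y j * Sch j i y) else 0)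
      + (\<Sum>j=1..n-1. \<Sum>l=1..n-1. y j * y l * pd i (Sch j l) y)" for y
    by (rule pd_quadratic_form) simp
  ultimately show ?thesis unfolding Sch_xx_fun using i by (simp add: fun_eq_iff Sch_x_def)
qed

lemma pd_Sch_xx_bd:
  assumes k2: "k \<ge> 2" and i: "i \<in> {1..n-1}" and y: "y n = 0"
  shows "pd i Sch_xx y = real k * Sch_x i y"
proof -
  have "(\<Sum>j=1..n-1. \<Sum>l=1..n-1. y j * y l * pd i (Sch j l) y) = (\<Sum>l=1..n-1. y l * (\<Sum>j=1..n-1. y j * pd j (Sch i l) y))"
  proof -
    have "(\<Sum>j=1..n-1. \<Sum>l=1..n-1. y j * y l * pd i (Sch j l) y) = (\<Sum>j=1..n-1. \<Sum>l=1..n-1. y j * y l * pd j (Sch i l) y)"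
      by (intro sum.cong refl) (use pd_Sch_swap i in auto)
    also have "\<dots> = (\<Sum>l=1..n-1. \<Sum>j=1..n-1. y l * (y j * pd j (Sch i l) y))"
      by (subst sum.swap) (simp add: mult_ac)
    finally show ?thesis by (simp add: sum_distrib_left)
  qed
  also have "\<dots> = (\<Sum>l=1..n-1. y l * ((real k - 2) * Sch i l y))"
    using euler_bd[where y=y, OF poly_Sch homog0_Sch[OF k2] y] k2 by (simp add: of_nat_diff)
  also have "\<dots> = (real k - 2) * Sch_x i y" unfolding Sch_x_def by (simp add: sum_distrib_left mult_ac)
  finally show ?thesis using pd_Sch_xx[OF i] by (simp add: algebra_simps)
qed

lemma div_Sch_tan: "l \<in> {1..n-1} \<Longrightarrow> (\<lambda>x. \<Sum>i=1..n-1. pd i (Sch i l) x) = pd l tr_Sch"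
proof -
  assume l: "l \<in> {1..n-1}"
  have "pd i (Sch i l) = pd l (Sch i i)" if "i \<in> {1..n-1}" for i
    using pd_Sch_swap[of l i i] Sch_sym_tan[OF that l] that l by auto
  then show ?thesis unfolding tr_Sch_def by (simp add: fun_eq_iff)
qed

lemma pd_Sch_x: "i \<in> {1..n-1} \<Longrightarrow> pd i (Sch_x i) y = Sch i i y + (\<Sum>l=1..n-1. y l * pd i (Sch i l) y)"
  unfolding Sch_x_fun by (simp add: sum.distrib)

lemma pd_pd_Sch_xx:
  assumes i: "i \<in> {1..n-1}"
  shows "pd i (pd i Sch_xx) y = 2 * Sch i i y + 4 * (\<Sum>l=1..n-1. y l * pd i (Sch i l) y)
      + (\<Sum>j=1..n-1. \<Sum>l=1..n-1. y j * y l * pd i (pd i (Sch j l)) y)"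
proof -
  have s: "(\<Sum>j=1..n-1. y j * pd i (Sch j i) y) = (\<Sum>l=1..n-1. y l * pd i (Sch i l) y)"
    by (rule sum.cong[OF refl]) (use Sch_sym_tan i in auto)
  have "pd i (pd i Sch_xx) y = 2 * pd i (Sch_x i) y + pd i (\<lambda>x. \<Sum>j=1..n-1. \<Sum>l=1..n-1. x j * x l * pd i (Sch j l) x) y"
    unfolding pd_Sch_xx[OF i] by simp
  also have "\<dots> = 2 * Sch i i y + 4 * (\<Sum>l=1..n-1. y l * pd i (Sch i l) y)
    + (\<Sum>j=1..n-1. \<Sum>l=1..n-1. y j * y l * pd i (pd i (Sch j l)) y)"
    unfolding pd_Sch_x[OF i] pd_quadratic_form[of "\<lambda>j l. pd i (Sch j l)", OF is_poly_pd[OF is_poly_Sch]]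
    using i s by simp
  finally show ?thesis .
qed

(* Contractions of the tangential divergence and Laplacian of A with x on the boundary,
   evaluated by the Cotton identity and Euler's identity for the tangential trace of A. *)
lemma contract_div_Sch_bd:
  assumes k2: "k \<ge> 2" and y: "y n = 0"
  shows "(\<Sum>i=1..n-1. \<Sum>l=1..n-1. y l * pd i (Sch i l) y) = (real k - 2) * tr_Sch y"
proof -
  have "(\<Sum>i=1..n-1. \<Sum>l=1..n-1. y l * pd i (Sch i l) y) = (\<Sum>l=1..n-1. y l * (\<Sum>i=1..n-1. pd i (Sch i l) y))"
    by (subst sum.swap) (simp add: sum_distrib_left)
  also have "\<dots> = (\<Sum>l=1..n-1. y l * pd l tr_Sch y)"
    by (rule sum.cong[OF refl]) (use div_Sch_tan in \<open>auto simp: fun_eq_iff\<close>)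
  also have "\<dots> = (real k - 2) * tr_Sch y"
    using euler_bd[where y=y, OF poly_tr_Sch homog_tr_Sch[OF k2] y] k2 by (simp add: of_nat_diff)
  finally show ?thesis .
qed

lemma tan_lap_Sch_eq:
  assumes j: "j \<in> {1..n-1}" and l: "l \<in> {1..n-1}"
  shows "(\<Sum>i=1..n-1. pd i (pd i (Sch j l)) y) = pd j (pd l tr_Sch) y"
proof -
  have "(\<Sum>i=1..n-1. pd i (pd i (Sch j l)) y) = (\<Sum>i=1..n-1. pd j (pd i (Sch i l)) y)"
  proof (rule sum.cong[OF refl])
    fix i assume i: "i \<in> {1..n-1}"
    have "pd i (Sch j l) = pd j (Sch i l)" using pd_Sch_swap[of j i l] i j l by auto
    then show "pd i (pd i (Sch j l)) y = pd j (pd i (Sch i l)) y" using pd_comm[OF is_poly_Sch] by metis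
  qed
  also have "\<dots> = pd j (\<lambda>x. \<Sum>i=1..n-1. pd i (Sch i l) x) y" by simp
  also have "\<dots> = pd j (pd l tr_Sch) y" unfolding div_Sch_tan[OF l] ..
  finally show ?thesis .
qed

lemma contract_lap_Sch_bd:
  assumes k2: "k \<ge> 2" and y: "y n = 0"
  shows "(\<Sum>i=1..n-1. \<Sum>j=1..n-1. \<Sum>l=1..n-1. y j * y l * pd i (pd i (Sch j l)) y)
    = (real k - 3) * (real k - 2) * tr_Sch y"
proof -
  have "(\<Sum>i=1..n-1. \<Sum>j=1..n-1. \<Sum>l=1..n-1. y j * y l * pd i (pd i (Sch j l)) y)
      = (\<Sum>j=1..n-1. \<Sum>l=1..n-1. \<Sum>i=1..n-1. y j * y l * pd i (pd i (Sch j l)) y)"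
    by (subst sum.swap) (rule sum.cong[OF refl], rule sum.swap)
  also have "\<dots> = (\<Sum>j=1..n-1. \<Sum>l=1..n-1. y j * y l * (\<Sum>i=1..n-1. pd i (pd i (Sch j l)) y))"
    by (simp add: sum_distrib_left)
  also have "\<dots> = (\<Sum>j=1..n-1. \<Sum>l=1..n-1. y j * y l * pd j (pd l tr_Sch) y)"
    by (intro sum.cong refl) (use tan_lap_Sch_eq in auto)
  also have "\<dots> = (real (k - 2) - 1) * real (k - 2) * tr_Sch y"
    by (rule euler2_bd[where y=y, OF poly_tr_Sch homog_tr_Sch[OF k2] y])
  finally show ?thesis using k2 by (simp add: of_nat_diff)
qed

lemma tan_lap_Sch_xx_bd:
  assumes k2: "k \<ge> 2" and y: "y n = 0"
  shows "tan_lap n Sch_xx y = real k * (real k - 1) * tr_Sch y"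
proof -
  have "tan_lap n Sch_xx y = 2 * tr_Sch y + 4 * (\<Sum>i=1..n-1. \<Sum>l=1..n-1. y l * pd i (Sch i l) y)
      + (\<Sum>i=1..n-1. \<Sum>j=1..n-1. \<Sum>l=1..n-1. y j * y l * pd i (pd i (Sch j l)) y)"
    unfolding tan_lap_def tr_Sch_def by (simp add: pd_pd_Sch_xx sum.distrib sum_distrib_left)
  also have "\<dots> = real k * (real k - 1) * tr_Sch y"
    unfolding contract_div_Sch_bd[where y=y, OF k2 y] contract_lap_Sch_bd[where y=y, OF k2 y] by (simp add: algebra_simps)
  finally show ?thesis .
qed

lemma poly_Sch_xx: "Sch_xx \<in> poly_in {1..n}"
  unfolding Sch_xx_fun
proof (rule poly_in_sum)
  fix j assume j: "j \<in> {1..n-1}"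
  show "(\<lambda>x. \<Sum>l=1..n-1. x j * x l * Sch j l x) \<in> poly_in {1..n}"
  proof (rule poly_in_sum)
    fix l assume l: "l \<in> {1..n-1}"
    show "(\<lambda>x. x j * x l * Sch j l x) \<in> poly_in {1..n}"
      using j l by (intro poly_in_mult poly_in_coord poly_Sch) auto
  qed
qed

lemma homog_Sch_xx: "k \<ge> 2 \<Longrightarrow> homog 0 k Sch_xx"
proof -
  assume k2: "k \<ge> 2"
  have H: "homog 0 (1 + 1 + (k - 2)) (\<lambda>x. x j * x l * Sch j l x)" for j l
    by (intro homog_mult homog_coord homog0_Sch[OF k2])
  have e: "1 + 1 + (k - 2) = k" using k2 by simp
  have "homog 0 k (\<lambda>x. x j * x l * Sch j l x)" for j l using H[of j l] unfolding e .
  then show ?thesis unfolding Sch_xx_fun by (intro homog_sum) auto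
qed

definition Sch_xx_bd :: "(nat \<Rightarrow> real) \<Rightarrow> real" where "Sch_xx_bd = (\<lambda>x. Sch_xx (x(n := 0)))"

lemma pd_Sch_xx_bd_fun: "i \<in> {1..n-1} \<Longrightarrow> pd i Sch_xx_bd = (\<lambda>x. pd i Sch_xx (x(n := 0)))"
  unfolding Sch_xx_bd_def using pd_restrict[of i n Sch_xx] by (auto simp: fun_eq_iff)

lemma pd2_Sch_xx_bd: "i \<in> {1..n-1} \<Longrightarrow> pd i (pd i Sch_xx_bd) x = pd i (pd i Sch_xx) (x(n := 0))"
  unfolding pd_Sch_xx_bd_fun using pd_restrict[of i n "pd i Sch_xx"] by auto

(* The key step on the boundary: for k \<ge> 2, the restriction of x_j x_l A_jl to x_n = 0
   satisfies |x'|^2 \<Delta>' f = -k (k-1) (n-3) f, by the trace identity; hence it vanishes by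
   the descent lemma. *)
lemma Sch_xx_bd_zero:
  assumes k2: "k \<ge> 2"
  shows "Sch_xx_bd x = 0"
proof (rule tangential_descent[where f=Sch_xx_bd and r=k and \<mu>="real k * (real k - 1) * (real n - 3)"])
  show "n \<ge> 1" "real k * (real k - 1) * (real n - 3) > 0" using k2 n4 by auto
  show "Sch_xx_bd \<in> poly_in {1..n}" unfolding Sch_xx_bd_def by (rule poly_in_restrict[OF poly_Sch_xx])
  show "homog 0 k Sch_xx_bd" unfolding Sch_xx_bd_def by (rule homog_restrict[OF homog_Sch_xx[OF k2]])
  show "\<And>x. Sch_xx_bd x = Sch_xx_bd (x(n := 0))" unfolding Sch_xx_bd_def by simp
  show "tan_sq n x * tan_lap n Sch_xx_bd x = - (real k * (real k - 1) * (real n - 3)) * Sch_xx_bd x"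
    for x :: "nat \<Rightarrow> real"
  proof -
    define y where "y = x(n := 0)"
    have y: "y n = 0" unfolding y_def by simp
    have "tan_lap n Sch_xx_bd x = tan_lap n Sch_xx y"
      unfolding tan_lap_def y_def by (rule sum.cong[OF refl]) (rule pd2_Sch_xx_bd)
    also have "\<dots> = real k * (real k - 1) * tr_Sch y" by (rule tan_lap_Sch_xx_bd[where y=y, OF k2 y])
    finally have L: "tan_lap n Sch_xx_bd x = real k * (real k - 1) * tr_Sch y" .
    have N: "tan_sq n x = tan_sq n y" unfolding tan_sq_def y_def by (rule sum.cong[OF refl]) auto
    have T: "tan_sq n y * tr_Sch y = - ((real n - 3) * Sch_xx y)"
      using trace_identity_bd[where y=y, OF y] unfolding tr_Sch_def by linarith
    have "tan_sq n y * (real k * (real k - 1) * tr_Sch y) = real k * (real k - 1) * (tan_sq n y * tr_Sch y)"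
      by (simp add: mult_ac)
    also have "\<dots> = - (real k * (real k - 1) * (real n - 3)) * Sch_xx y" unfolding T by (simp add: mult_ac)
    also have "Sch_xx y = Sch_xx_bd x" unfolding Sch_xx_bd_def y_def ..
    finally show ?thesis unfolding L N .
  qed
qed

(* From Sch_xx = 0 on the boundary: first x_l A_il = 0, then A_il = 0 (differentiate
   tangentially, use Euler's identity for A of degree k - 2), and finally G_il = 0 by
   G_via_Sch_bd. *)
lemma Sch_x_bd_zero:
  assumes k2: "k \<ge> 2" and i: "i \<in> {1..n-1}" and y: "y n = 0"
  shows "Sch_x i y = 0"
proof -
  have "Sch_xx_bd = (\<lambda>x. 0)" using Sch_xx_bd_zero[OF k2] by (simp add: fun_eq_iff)
  then have "pd i Sch_xx_bd y = 0" by simp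
  moreover have "pd i Sch_xx_bd y = pd i Sch_xx y" using pd_Sch_xx_bd_fun[OF i] y by (simp add: fun_upd_idem)
  ultimately show ?thesis using pd_Sch_xx_bd[where y=y, OF k2 i y] k2 by simp
qed

lemma Sch_bd_zero:
  assumes i: "i \<in> {1..n-1}" and l: "l \<in> {1..n-1}" and y: "y n = 0"
  shows "Sch i l y = 0"
proof (cases "k \<ge> 2")
  case False
  then have "k = 1" using k1 by simp
  then show ?thesis by (rule Sch_zero_deg1)
next
  case k2: True
  have s0: "pd l (Sch_x i) y = 0"
    by (rule hyperplane_pd_zero[of n]) (use Sch_x_bd_zero[OF k2 i] l y n4 in auto)
  have s1: "pd l (Sch_x i) y = Sch i l y + (\<Sum>b=1..n-1. y b * pd b (Sch i l) y)"
  proof -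
    have "pd l (Sch i b) = pd b (Sch i l)" if b: "b \<in> {1..n-1}" for b
      using pd_Sch_swap[of b l i] Sch_sym_tan[OF i b] Sch_sym_tan[OF i l] i l b by auto
    then show ?thesis unfolding Sch_x_fun using l by (simp add: sum.distrib)
  qed
  have s2: "(\<Sum>b=1..n-1. y b * pd b (Sch i l) y) = (real k - 2) * Sch i l y"
    using euler_bd[where y=y, OF poly_Sch homog0_Sch[OF k2] y] k2 by (simp add: of_nat_diff)
  have "Sch i l y + (real k - 2) * Sch i l y = 0" using s0 s1 s2 by simp
  then have "(real k - 1) * Sch i l y = 0" by (simp add: algebra_simps)
  then show ?thesis using k2 by simp
qed

lemma G_bd_zero:
  assumes i: "i \<in> {1..n-1}" and q: "q \<in> {1..n-1}" and y: "y n = 0"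
  shows "G i q y = 0"
proof -
  have A: "Sch a b y = 0" if "a \<in> {1..n-1}" "b \<in> {1..n-1}" for a b using Sch_bd_zero[where y=y, OF that y] .
  have "Sch_x a y = 0" if "a \<in> {1..n-1}" for a unfolding Sch_x_def using A that by simp
  moreover have "Sch_xx y = 0" unfolding Sch_xx_def using A by simp
  ultimately have "real k * (real k + 1) * G i q y = 0" using G_via_Sch_bd[where y=y, OF i q y] A[OF i q] i q by simp
  then show ?thesis using k1 by simp
qed

end

(* The interior argument. For i, j tangential, the Weyl equation Z_injn = 0 expresses
   (n - 3) \<partial>_n^2 G_ij through tangential derivatives; normal_rhs is that expression. *)
definition normal_rhs :: "nat \<Rightarrow> (nat \<Rightarrow> nat \<Rightarrow> (nat \<Rightarrow> real) \<Rightarrow> real) \<Rightarrow> nat \<Rightarrow> nat \<Rightarrow> (nat \<Rightarrow> real) \<Rightarrow> real" where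
  "normal_rhs n F i j = (\<lambda>x. - ((\<Sum>e=1..n-1. pd j (pd e (F i e)) x) + (\<Sum>e=1..n-1. pd i (pd e (F j e)) x)
     - (\<Sum>e=1..n-1. pd e (pd e (F i j)) x)) + 2 / (real n - 1) * (\<Sum>e=1..n-1. \<Sum>f=1..n-1. pd e (pd f (F e f)) x) * kron i j)"

lemma is_poly_normal_rhs[simp]: "(\<And>a b. is_poly (F a b)) \<Longrightarrow> is_poly (normal_rhs n F i j)"
  unfolding normal_rhs_def by simp

lemma pd_normal_rhs: "(\<And>a b. is_poly (F a b)) \<Longrightarrow> pd c (normal_rhs n F i j) = normal_rhs n (\<lambda>a b. pd c (F a b)) i j"
proof -
  assume pfF: "\<And>a b. is_poly (F a b)"
  have c3: "pd c (pd u (pd v (F a b))) = pd u (pd v (pd c (F a b)))" for u v a b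
    by (metis pd_comm pfF is_poly_pd)
  show ?thesis unfolding normal_rhs_def using pfF by (simp add: c3)
qed

lemma normal_rhs_bd:
  assumes z: "\<And>a b x. a \<in> {1..n-1} \<Longrightarrow> b \<in> {1..n-1} \<Longrightarrow> x n = 0 \<Longrightarrow> F a b x = 0"
    and i: "i \<in> {1..n-1}" and j: "j \<in> {1..n-1}" and y: "y n = 0" and n: "n \<ge> 1"
  shows "normal_rhs n F i j y = 0"
proof -
  have d: "pd u (pd v (F a b)) y = 0" if "u \<in> {1..n-1}" "v \<in> {1..n-1}" "a \<in> {1..n-1}" "b \<in> {1..n-1}" for u v a b
    by (rule hyperplane_pd2_zero[of n]) (use that z y n in auto)
  show ?thesis unfolding normal_rhs_def using d i j by simp
qed

lemma zero_cauchy_data: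
  assumes F: "is_poly F" and F2: "\<And>x. pd m (pd m F) x = 0" and b0: "\<And>x. x m = 0 \<Longrightarrow> F x = 0"
    and b1: "\<And>x. x m = 0 \<Longrightarrow> pd m F x = 0"
  shows "F x = 0"
proof -
  define z where "z = x(m := 0)"
  define g where "g t = F (z(m := t))" for t
  have zz: "z(m := z m + s) = z(m := s)" for s by (simp add: z_def)
  have g': "(g has_real_derivative pd m F (z(m := t))) (at t)" for t
    using poly_in_coord_deriv[of F _ z m t] F unfolding g_def is_poly_def zz by (metis zz)
  have h': "((\<lambda>t. pd m F (z(m := t))) has_real_derivative 0) (at t)" for t
  proof -
    have "((\<lambda>s. pd m F (z(m := z m + s))) has_real_derivative pd m (pd m F) (z(m := z m + t))) (at t)"
      using poly_in_coord_deriv[of "pd m F" _ z m t] F unfolding is_poly_def by (metis poly_in_pd)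
    then show ?thesis using F2 unfolding zz by simp
  qed
  have "pd m F (z(m := t)) = pd m F (z(m := 0))" for t
    using DERIV_isconst_all[of "\<lambda>t. pd m F (z(m := t))"] h' by blast
  then have g'0: "(g has_real_derivative 0) (at t)" for t using g' b1[of "z(m := 0)"] by simp
  have "g (x m) = g 0" using DERIV_isconst_all[of g] g'0 by blast
  moreover have "g (x m) = F x" unfolding g_def z_def by simp
  moreover have "g 0 = 0" unfolding g_def using b0 by simp
  ultimately show ?thesis by simp
qed

definition normal_system :: "nat \<Rightarrow> nat \<Rightarrow> (nat \<Rightarrow> nat \<Rightarrow> (nat \<Rightarrow> real) \<Rightarrow> real) \<Rightarrow> bool" where
  "normal_system n r F \<longleftrightarrow> (\<forall>a b. F a b \<in> poly_in {1..n}) \<and> (\<forall>a b. homog 0 r (F a b))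
    \<and> (\<forall>i\<in>{1..n-1}. \<forall>j\<in>{1..n-1}. (\<lambda>x. (real n - 3) * pd n (pd n (F i j)) x) = normal_rhs n F i j)
    \<and> (\<forall>i\<in>{1..n-1}. \<forall>j\<in>{1..n-1}. \<forall>x. x n = 0 \<longrightarrow> F i j x = 0)
    \<and> (\<forall>i\<in>{1..n-1}. \<forall>j\<in>{1..n-1}. \<forall>x. x n = 0 \<longrightarrow> pd n (F i j) x = 0)"

(* The normal equation is preserved by \<partial>_n^2, which commutes with all derivatives in it. *)
lemma normal_eq_pd2:
  assumes pfF: "\<And>a b. is_poly (F a b)"
    and E: "(\<lambda>x. (real n - 3) * pd n (pd n (F a b)) x) = normal_rhs n F a b"
  shows "(\<lambda>x. (real n - 3) * pd n (pd n (pd n (pd n (F a b)))) x) = normal_rhs n (\<lambda>a b. pd n (pd n (F a b))) a b"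
proof -
  have "pd n (pd n (\<lambda>x. (real n - 3) * pd n (pd n (F a b)) x)) = pd n (pd n (normal_rhs n F a b))"
    using E by simp
  then show ?thesis using pfF by (simp add: pd_normal_rhs)
qed

(* \<partial>_n^2 F again forms a normal system, of degree r - 2: differentiate the normal
   equation, and read off its Cauchy data from the equation on the boundary. *)
lemma normal_system_step:
  assumes sys: "normal_system n r F" and n4: "n \<ge> 4" and r: "r \<ge> 2"
  shows "normal_system n (r - 2) (\<lambda>a b. pd n (pd n (F a b)))"
proof -
  define F' where "F' = (\<lambda>a b. pd n (pd n (F a b)))"
  have Fp: "\<forall>a b. F a b \<in> poly_in {1..n}" and Fh: "\<forall>a b. homog 0 r (F a b)"
    and E: "\<forall>i\<in>{1..n-1}. \<forall>j\<in>{1..n-1}. (\<lambda>x. (real n - 3) * pd n (pd n (F i j)) x) = normal_rhs n F i j"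
    and B0: "\<forall>i\<in>{1..n-1}. \<forall>j\<in>{1..n-1}. \<forall>x. x n = 0 \<longrightarrow> F i j x = 0"
    and B1: "\<forall>i\<in>{1..n-1}. \<forall>j\<in>{1..n-1}. \<forall>x. x n = 0 \<longrightarrow> pd n (F i j) x = 0"
    using sys unfolding normal_system_def by blast+
  have pfF: "\<And>a b. is_poly (F a b)" using Fp is_poly_def by blast
  have n3: "real n - 3 \<noteq> 0" using n4 by simp
  have F'p: "\<forall>a b. F' a b \<in> poly_in {1..n}" unfolding F'_def using Fp by simp
  have F'h: "\<forall>a b. homog 0 (r - 2) (F' a b)"
    unfolding F'_def using homog_lower[OF homog_pd2[OF pfF]] Fh r by simp
  have E': "\<forall>a\<in>{1..n-1}. \<forall>b\<in>{1..n-1}. (\<lambda>x. (real n - 3) * pd n (pd n (F' a b)) x) = normal_rhs n F' a b"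
    using normal_eq_pd2[where F=F and n=n, OF pfF] E unfolding F'_def by blast
  have B0': "\<forall>a\<in>{1..n-1}. \<forall>b\<in>{1..n-1}. \<forall>y. y n = 0 \<longrightarrow> F' a b y = 0"
  proof (intro ballI allI impI)
    fix a b and y :: "nat \<Rightarrow> real" assume a: "a \<in> {1..n-1}" and b: "b \<in> {1..n-1}" and y: "y n = 0"
    have "(real n - 3) * F' a b y = normal_rhs n F a b y"
      using fun_cong[OF E[rule_format, OF a b], of y] unfolding F'_def by simp
    also have "\<dots> = 0" by (rule normal_rhs_bd[where n=n and y=y, OF _ a b y]) (use B0 n4 in auto)
    finally show "F' a b y = 0" using n3 by simp
  qed
  have B1': "\<forall>a\<in>{1..n-1}. \<forall>b\<in>{1..n-1}. \<forall>y. y n = 0 \<longrightarrow> pd n (F' a b) y = 0"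
  proof (intro ballI allI impI)
    fix a b and y :: "nat \<Rightarrow> real" assume a: "a \<in> {1..n-1}" and b: "b \<in> {1..n-1}" and y: "y n = 0"
    have "pd n (\<lambda>x. (real n - 3) * pd n (pd n (F a b)) x) = pd n (normal_rhs n F a b)"
      using E a b by simp
    then have "(real n - 3) * pd n (F' a b) y = normal_rhs n (\<lambda>a b. pd n (F a b)) a b y"
      using pfF by (simp add: pd_normal_rhs F'_def fun_eq_iff)
    also have "\<dots> = 0" by (rule normal_rhs_bd[where n=n and y=y, OF _ a b y]) (use B1 pfF n4 in auto)
    finally show "pd n (F' a b) y = 0" using n3 by simp
  qed
  show ?thesis using F'p F'h E' B0' B1' unfolding normal_system_def F'_def by blast
qed

(* A normal system vanishes: by induction on the degree, \<partial>_n^2 F vanishes (for degree < 2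
   by homogeneity, otherwise by the step lemma), so F vanishes by its zero Cauchy data. *)
lemma normal_system_zero:
  assumes n4: "n \<ge> 4"
  shows "normal_system n r F \<Longrightarrow> i \<in> {1..n-1} \<Longrightarrow> j \<in> {1..n-1} \<Longrightarrow> F i j x = 0"
proof (induction r arbitrary: F i j x rule: less_induct)
  case (less r)
  have pfF: "\<And>a b. is_poly (F a b)"
    using less.prems(1) is_poly_def unfolding normal_system_def by blast
  have pd2_zero: "pd n (pd n (F i j)) y = 0" for y
  proof (cases "r < 2")
    case True
    have "homog 2 r (pd n (pd n (F i j)))"
      using less.prems(1) homog_pd2[OF pfF] unfolding normal_system_def by blast
    then show ?thesis using homog_negative_zero[OF is_poly_pd[OF is_poly_pd[OF pfF]] _ True] by blast
  next
    case False
    then have "normal_system n (r - 2) (\<lambda>a b. pd n (pd n (F a b)))"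
      using normal_system_step[OF less.prems(1) n4] by simp
    then show ?thesis using False less.IH[of "r - 2"] less.prems(2,3) by force
  qed
  show ?case
  proof (rule zero_cauchy_data[of "F i j" n])
    show "\<And>x. x n = 0 \<Longrightarrow> F i j x = 0" "\<And>x. x n = 0 \<Longrightarrow> pd n (F i j) x = 0"
      using less.prems unfolding normal_system_def by blast+
  qed (use pfF pd2_zero in auto)
qed

context flat_homog_tensor begin

(* The interior argument for G. Since G_an = 0, divergences and Laplacians of G split
   into tangential parts and \<partial>_n^2. *)
lemma Gn_left: "a \<in> {1..n} \<Longrightarrow> G n a = (\<lambda>x. 0)"
  using symG[of n a] Gn[of a] n4 by auto

lemma divG_tan: "i \<in> {1..n} \<Longrightarrow> divG i = (\<lambda>x. \<Sum>e=1..n-1. pd e (G i e) x)"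
proof -
  assume i: "i \<in> {1..n}"
  have "divG i x = (\<Sum>e=1..n-1. pd e (G i e) x)" for x
    unfolding divG_def using sum_split_last[of n "\<lambda>e. pd e (G i e) x"] n4 Gn[OF i] by simp
  then show ?thesis by (simp add: fun_eq_iff)
qed

lemma divG_normal: "divG n = (\<lambda>x. 0)"
  unfolding divG_def
proof (rule ext, rule sum.neutral, rule ballI)
  fix x e assume "e \<in> {1..n}"
  then show "pd e (G n e) x = 0" using Gn_left[of e] by simp
qed

lemma lap_split: "lap F x = (\<Sum>e=1..n-1. pd e (pd e F) x) + pd n (pd n F) x"
  unfolding lap_def using sum_split_last[of n "\<lambda>e. pd e (pd e F) x"] n4 by simp

lemma div2G_tan: "div2G x = (\<Sum>e=1..n-1. \<Sum>f=1..n-1. pd e (pd f (G e f)) x)"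
proof -
  have "div2G x = (\<Sum>e=1..n-1. pd e (divG e) x) + pd n (divG n) x"
    unfolding div2G_def using sum_split_last[of n "\<lambda>e. pd e (divG e) x"] n4 by simp
  also have "\<dots> = (\<Sum>e=1..n-1. pd e (divG e) x)" unfolding divG_normal by simp
  also have "\<dots> = (\<Sum>e=1..n-1. \<Sum>f=1..n-1. pd e (pd f (G e f)) x)"
    by (rule sum.cong[OF refl]) (subst divG_tan, auto)
  finally show ?thesis .
qed

lemma weyl_injn:
  assumes i: "i \<in> {1..n-1}" and j: "j \<in> {1..n-1}"
  shows "weyl n G i n j n x
    = pd n (pd n (G i j)) x + 1 / (real n - 2) * (schouten n G i j x + schouten n G n n x * kron i j)"
proof -
  have i': "i \<in> {1..n}" and j': "j \<in> {1..n}" and nn: "n \<in> {1..n}" and "i \<noteq> n" "j \<noteq> n"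
    using i j n4 by auto
  then show ?thesis using Gn[OF i'] Gn_left[OF j'] Gn_left[OF nn] unfolding weyl_def kron_def by simp
qed

lemma schouten_tan:
  assumes i: "i \<in> {1..n-1}" and j: "j \<in> {1..n-1}"
  shows "schouten n G i j x = (\<Sum>e=1..n-1. pd j (pd e (G i e)) x) + (\<Sum>e=1..n-1. pd i (pd e (G j e)) x)
    - ((\<Sum>e=1..n-1. pd e (pd e (G i j)) x) + pd n (pd n (G i j)) x)
    - (\<Sum>e=1..n-1. \<Sum>f=1..n-1. pd e (pd f (G e f)) x) / (real n - 1) * kron i j"
proof -
  have i': "i \<in> {1..n}" and j': "j \<in> {1..n}" using i j by auto
  have "schouten n G i j x = pd j (divG i) x + pd i (divG j) x - lap (G i j) x - div2G x / (real n - 1) * kron i j"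
    using fun_cong[OF Sch_eq[of i j], of x] unfolding Sch_def .
  then show ?thesis unfolding divG_tan[OF i'] divG_tan[OF j'] lap_split div2G_tan by simp
qed

lemma schouten_nn: "schouten n G n n x = - (\<Sum>e=1..n-1. \<Sum>f=1..n-1. pd e (pd f (G e f)) x) / (real n - 1)"
proof -
  have nn: "n \<in> {1..n}" using n4 by auto
  have "schouten n G n n x = Sch n n x" unfolding Sch_def ..
  then show ?thesis unfolding Sch_eq divG_normal lap_def div2G_tan using Gn_left[OF nn] by simp
qed

lemma weyl_normal_eq:
  assumes i: "i \<in> {1..n-1}" and j: "j \<in> {1..n-1}"
  shows "(\<lambda>x. (real n - 3) * pd n (pd n (G i j)) x) = normal_rhs n G i j"
proof
  fix x
  define N2 where "N2 = pd n (pd n (G i j)) x"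
  define a where "a = (\<Sum>e=1..n-1. pd j (pd e (G i e)) x) + (\<Sum>e=1..n-1. pd i (pd e (G j e)) x)
    - (\<Sum>e=1..n-1. pd e (pd e (G i j)) x)"
  define T where "T = (\<Sum>e=1..n-1. \<Sum>f=1..n-1. pd e (pd f (G e f)) x) / (real n - 1) * kron i j"
  have "weyl n G i n j n x = 0" by (rule weyl_G) (use i j n4 in auto)
  then have "N2 + 1 / (real n - 2) * (a - N2 - T - T) = 0"
    unfolding weyl_injn[OF i j] schouten_tan[OF i j] schouten_nn N2_def a_def T_def
    by (simp add: algebra_simps)
  then have "(real n - 2) * N2 + (a - N2 - T - T) = 0"
    using n_minus_nonzero by (simp add: field_simps)
  then have "(real n - 3) * N2 = - a + 2 * T" by (simp add: algebra_simps)
  then show "(real n - 3) * pd n (pd n (G i j)) x = normal_rhs n G i j x"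
    unfolding normal_rhs_def N2_def a_def T_def by (simp add: algebra_simps)
qed

lemma G_zero: "a \<in> {1..n} \<Longrightarrow> b \<in> {1..n} \<Longrightarrow> G a b x = 0"
proof -
  assume a: "a \<in> {1..n}" and b: "b \<in> {1..n}"
  have "normal_system n k G"
    unfolding normal_system_def using poly_G homG weyl_normal_eq G_bd_zero bd_pdn by blast
  then have int: "\<forall>i\<in>{1..n-1}. \<forall>j\<in>{1..n-1}. \<forall>x. G i j x = 0"
    using normal_system_zero[OF n4] by blast
  show ?thesis
  proof (cases "a = n \<or> b = n")
    case True
    then show ?thesis using Gn[OF a] Gn_left[OF b] by auto
  next
    case False
    then show ?thesis using int a b by auto
  qed
qed

end

lemma weyl_add:
  assumes "\<And>a b. is_poly (F a b)" "\<And>a b. is_poly (G a b)"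
  shows "weyl n (\<lambda>a b x. F a b x + G a b x) a b c d x = weyl n F a b c d x + weyl n G a b c d x"
  unfolding weyl_def schouten_def using assms by (simp add: sum.distrib algebra_simps)

lemma weyl_sum:
  assumes "finite K" "\<And>m a b. is_poly (F m a b)"
  shows "weyl n (\<lambda>a b x. \<Sum>m\<in>K. F m a b x) a b c d x = (\<Sum>m\<in>K. weyl n (F m) a b c d x)"
  using assms(1)
proof (induction K rule: finite_induct)
  case empty
  show ?case unfolding weyl_def schouten_def by simp
next
  case (insert j K)
  have "weyl n (\<lambda>a b x. \<Sum>m\<in>insert j K. F m a b x) a b c d x
      = weyl n (\<lambda>a b x. F j a b x + (\<Sum>m\<in>K. F m a b x)) a b c d x"
    using insert by simp
  also have "\<dots> = weyl n (F j) a b c d x + weyl n (\<lambda>a b x. \<Sum>m\<in>K. F m a b x) a b c d x"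
    by (rule weyl_add) (use assms(2) in auto)
  finally show ?case using insert by simp
qed

lemma schouten_cong:
  assumes FF: "\<And>a b. a \<in> {1..n} \<Longrightarrow> b \<in> {1..n} \<Longrightarrow> F a b = F' a b"
    and a: "a \<in> {1..n}" and c: "c \<in> {1..n}"
  shows "schouten n F a c x = schouten n F' a c x"
proof -
  have "(\<Sum>e=1..n. pd c (pd e (F a e)) x) = (\<Sum>e=1..n. pd c (pd e (F' a e)) x)"
    "(\<Sum>e=1..n. pd a (pd e (F c e)) x) = (\<Sum>e=1..n. pd a (pd e (F' c e)) x)"
    "(\<Sum>e=1..n. \<Sum>f=1..n. pd e (pd f (F e f)) x) = (\<Sum>e=1..n. \<Sum>f=1..n. pd e (pd f (F' e f)) x)"
    by (intro sum.cong refl; metis FF a c)+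
  then show ?thesis unfolding schouten_def using FF[OF a c] by simp
qed

lemma weyl_cong:
  assumes "\<And>a b. a \<in> {1..n} \<Longrightarrow> b \<in> {1..n} \<Longrightarrow> F a b = F' a b"
    and "a \<in> {1..n}" "b \<in> {1..n}" "c \<in> {1..n}" "d \<in> {1..n}"
  shows "weyl n F a b c d x = weyl n F' a b c d x"
  unfolding weyl_def using assms schouten_cong[where F=F and F'=F', OF assms(1)] by simp

lemma is_poly_weyl:
  assumes F: "\<And>a b. is_poly (F a b)"
  shows "is_poly (\<lambda>x. weyl n F a b c d x)"
proof -
  have S: "is_poly (\<lambda>x. schouten n F a c x)" for a c
    unfolding schouten_def using F by (intro is_poly_diff is_poly_add is_poly_sum is_poly_multc is_poly_cmult) auto
  show ?thesis unfolding weyl_def using F S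
    by (intro is_poly_diff is_poly_add is_poly_sum is_poly_multc is_poly_cmult) auto
qed

lemma homog_weyl:
  assumes "\<And>a b. is_poly (F a b)" "\<And>a b. homog 0 m (F a b)"
  shows "homog 2 m (\<lambda>x. weyl n F a b c d x)"
proof -
  have D: "homog 2 m (pd u (pd v (F a b)))" for u v a b using homog_pd2 assms by blast
  have S: "homog 2 m (\<lambda>x. schouten n F a c x)" for a c
    unfolding schouten_def using D by (intro homog_diff homog_add homog_sum homog_multc homog_cmult) auto
  show ?thesis unfolding weyl_def using D S by (intro homog_diff homog_add homog_sum homog_multc homog_cmult) auto
qed

lemma graded_vanish_half_space:
  assumes K: "finite K" and P: "\<And>j. j \<in> K \<Longrightarrow> is_poly (\<Phi> j)"
    and h: "\<And>j. j \<in> K \<Longrightarrow> homog s (j + c) (\<Phi> j)"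
    and Z: "\<And>x. x n \<ge> 0 \<Longrightarrow> (\<Sum>j\<in>K. \<Phi> j x) = 0" and m: "m \<in> K"
  shows "\<Phi> m x = 0"
proof (rule poly_vanish_half_space[of "\<Phi> m" n])
  show "is_poly (\<Phi> m)" using P m .
  show "\<forall>y. y n \<ge> 0 \<longrightarrow> \<Phi> m y = 0"
  proof (intro allI impI)
    fix y :: "nat \<Rightarrow> real" assume y: "y n \<ge> 0"
    have dil: "\<And>x t. 0 \<le> x n \<Longrightarrow> 0 < t \<Longrightarrow> 0 \<le> dilate t x n" by (simp add: dilate_def)
    show "\<Phi> m y = 0" by (rule graded_components_zero[where P="\<lambda>x. 0 \<le> x n" and \<Phi>=\<Phi> and s=s and c=c and K=K and x=y, OF K h dil Z m y])
  qed
qed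

lemma poly_monomial: "monomial_fun n \<alpha> \<in> poly_in {1..n}"
  unfolding monomial_fun_def[abs_def] by (intro poly_in_prod poly_in_power poly_in_coord)

lemma homog_monomial: "homog 0 (\<Sum>k=1..n. \<alpha> k) (monomial_fun n \<alpha>)"
  unfolding homog_def monomial_fun_def dilate_def
  by (simp add: power_mult_distrib prod.distrib power_sum)

lemma finite_multi_indices: "finite (multi_indices n d)"
proof -
  have "multi_indices n d \<subseteq> {f. \<forall>x. (x \<in> {1..n} \<longrightarrow> f x \<in> {0..d}) \<and> (x \<notin> {1..n} \<longrightarrow> f x = 0)}"
  proof
    fix \<alpha> assume a: "\<alpha> \<in> multi_indices n d"
    have "\<alpha> x \<le> d" if "x \<in> {1..n}" for x
    proof -
      have "\<alpha> x \<le> (\<Sum>k=1..n. \<alpha> k)" using that by (intro member_le_sum) auto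
      then show ?thesis using a unfolding multi_indices_def by simp
    qed
    then show "\<alpha> \<in> {f. \<forall>x. (x \<in> {1..n} \<longrightarrow> f x \<in> {0..d}) \<and> (x \<notin> {1..n} \<longrightarrow> f x = 0)}"
      using a unfolding multi_indices_def by auto
  qed
  moreover have "finite {f. \<forall>x. (x \<in> {1..n} \<longrightarrow> f x \<in> {0..d}) \<and> (x \<notin> {1..n} \<longrightarrow> f x = (0::nat))}"
    by (rule finite_set_of_finite_funs) auto
  ultimately show ?thesis by (rule finite_subset)
qed

definition hom_part :: "nat \<Rightarrow> nat \<Rightarrow> (nat \<Rightarrow> nat \<Rightarrow> (nat \<Rightarrow> nat) \<Rightarrow> real) \<Rightarrow> nat \<Rightarrow> nat \<Rightarrow> nat \<Rightarrow> (nat \<Rightarrow> real) \<Rightarrow> real" where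
  "hom_part n d h m a b x =
     (\<Sum>\<alpha>\<in>{\<alpha>\<in>multi_indices n d. (\<Sum>k=1..n. \<alpha> k) = m}. h a b \<alpha> * monomial_fun n \<alpha> x)"

lemma poly_hom_part: "hom_part n d h m a b \<in> poly_in {1..n}"
  unfolding hom_part_def[abs_def] by (intro poly_in_sum poly_in_cmult poly_monomial)

lemma is_poly_hom_part: "is_poly (hom_part n d h m a b)"
  using poly_hom_part is_poly_def by blast

lemma homog_hom_part: "homog 0 m (hom_part n d h m a b)"
  unfolding hom_part_def[abs_def] using homog_monomial by (intro homog_sum homog_cmult) auto

lemma hom_part_decomp:
  "(\<Sum>\<alpha>\<in>multi_indices n d. h a b \<alpha> * monomial_fun n \<alpha> x) = (\<Sum>m\<in>{1..d}. hom_part n d h m a b x)"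
proof -
  have deg: "(\<lambda>\<alpha>. \<Sum>k=1..n. \<alpha> k) ` multi_indices n d \<subseteq> {1..d}"
    unfolding multi_indices_def by auto
  show ?thesis unfolding hom_part_def
    using sum.group[OF finite_multi_indices finite_atLeastAtMost deg, of "\<lambda>\<alpha>. h a b \<alpha> * monomial_fun n \<alpha> x"]
    by simp
qed

(* All its hypotheses are linear and compatible with dilations, so they pass
   from H to each homogeneous component Hk m = hom_part n dmax h m by graded vanishing. *)
locale graded_tensor =
  fixes n dmax :: nat and H :: "nat \<Rightarrow> nat \<Rightarrow> (nat \<Rightarrow> real) \<Rightarrow> real"
    and h :: "nat \<Rightarrow> nat \<Rightarrow> (nat \<Rightarrow> nat) \<Rightarrow> real"
  assumes n4: "n \<ge> 4" and adm: "admissible n H"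
    and coeffs: "\<And>a b x. a \<in> {1..n} \<Longrightarrow> b \<in> {1..n} \<Longrightarrow>
       H a b x = (\<Sum>\<alpha>\<in>multi_indices n dmax. h a b \<alpha> * monomial_fun n \<alpha> x)"
    and weyl_H: "\<forall>a\<in>{1..n}. \<forall>b\<in>{1..n}. \<forall>c\<in>{1..n}. \<forall>e\<in>{1..n}. \<forall>x. x n \<ge> 0 \<longrightarrow> weyl n H a b c e x = 0"
    and bd_pdn_H: "\<forall>i\<in>{1..n-1}. \<forall>j\<in>{1..n-1}. \<forall>x. x n = 0 \<longrightarrow> pd n (H i j) x = 0"
begin

abbreviation Hk :: "nat \<Rightarrow> nat \<Rightarrow> nat \<Rightarrow> (nat \<Rightarrow> real) \<Rightarrow> real" where
  "Hk \<equiv> hom_part n dmax h"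

lemma is_poly_Hk: "is_poly (Hk j a b)" by (rule is_poly_hom_part)
lemma homog_Hk: "homog 0 j (Hk j a b)" by (rule homog_hom_part)

lemma decomp: "a \<in> {1..n} \<Longrightarrow> b \<in> {1..n} \<Longrightarrow> H a b x = (\<Sum>j\<in>{1..dmax}. Hk j a b x)"
  using coeffs hom_part_decomp by simp

lemma admissible_parts:
  "\<forall>a\<in>{1..n}. \<forall>b\<in>{1..n}. \<forall>x. x n \<ge> 0 \<longrightarrow> H a b x = H b a x"
  "\<forall>x. x n \<ge> 0 \<longrightarrow> (\<Sum>a=1..n. H a a x) = 0"
  "\<forall>a\<in>{1..n}. \<forall>x. x n \<ge> 0 \<longrightarrow> H a n x = 0"
  "\<forall>i\<in>{1..n-1}. \<forall>x. x n = 0 \<longrightarrow> (\<Sum>j=1..n-1. x j * H i j x) = 0"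
  using adm unfolding admissible_def by blast+

lemmas vanish = graded_vanish_half_space[OF finite_atLeastAtMost]

lemma dilate_boundary: "x n = 0 \<Longrightarrow> 0 < t \<Longrightarrow> dilate t x n = 0"
  by (simp add: dilate_def)

lemma Hk_sym:
  assumes m: "m \<in> {1..dmax}" and a: "a \<in> {1..n}" and b: "b \<in> {1..n}"
  shows "Hk m a b = Hk m b a"
proof
  fix x
  have "Hk m a b x - Hk m b a x = 0"
  proof (rule vanish[where \<Phi>="\<lambda>j x. Hk j a b x - Hk j b a x" and c=0 and s=0, OF _ _ _ m])
    show "(\<Sum>j\<in>{1..dmax}. Hk j a b y - Hk j b a y) = 0" if "y n \<ge> 0" for y
      using admissible_parts(1) a b that by (simp add: decomp sum_subtractf)
  qed (use is_poly_Hk homog_Hk in auto)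
  then show "Hk m a b x = Hk m b a x" by simp
qed

lemma Hk_trace: "m \<in> {1..dmax} \<Longrightarrow> (\<Sum>a=1..n. Hk m a a x) = 0"
proof (rule vanish[where \<Phi>="\<lambda>j x. \<Sum>a=1..n. Hk j a a x" and c=0 and s=0])
  show "(\<Sum>j\<in>{1..dmax}. \<Sum>a=1..n. Hk j a a y) = 0" if "y n \<ge> 0" for y
    using admissible_parts(2) that by (subst sum.swap) (simp add: decomp)
qed (use is_poly_Hk homog_Hk in auto)

lemma Hk_normal: "m \<in> {1..dmax} \<Longrightarrow> a \<in> {1..n} \<Longrightarrow> Hk m a n = (\<lambda>x. 0)"
proof
  fix x assume m: "m \<in> {1..dmax}" and a: "a \<in> {1..n}"
  show "Hk m a n x = 0"
  proof (rule vanish[where \<Phi>="\<lambda>j x. Hk j a n x" and c=0 and s=0, OF _ _ _ m])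
    show "(\<Sum>j\<in>{1..dmax}. Hk j a n y) = 0" if "y n \<ge> 0" for y
      using admissible_parts(3) a n4 that decomp[of a n y] by simp
  qed (use is_poly_Hk homog_Hk in auto)
qed

lemma Hk_weyl:
  assumes m: "m \<in> {1..dmax}" and a: "a \<in> {1..n}" and b: "b \<in> {1..n}" and c: "c \<in> {1..n}" and e: "e \<in> {1..n}"
  shows "weyl n (Hk m) a b c e x = 0"
proof (rule vanish[where \<Phi>="\<lambda>j x. weyl n (Hk j) a b c e x" and c=0 and s=2, OF _ _ _ m])
  show "(\<Sum>j\<in>{1..dmax}. weyl n (Hk j) a b c e y) = 0" if y: "y n \<ge> 0" for y
  proof -
    have "(\<Sum>j\<in>{1..dmax}. weyl n (Hk j) a b c e y) = weyl n (\<lambda>a b x. \<Sum>j\<in>{1..dmax}. Hk j a b x) a b c e y"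
      by (rule weyl_sum[symmetric]) (simp_all add: is_poly_Hk)
    also have "\<dots> = weyl n H a b c e y"
      by (rule weyl_cong) (use decomp a b c e in \<open>auto simp: fun_eq_iff\<close>)
    finally show ?thesis using weyl_H a b c e y by simp
  qed
qed (use is_poly_weyl[OF is_poly_Hk] homog_weyl[OF is_poly_Hk homog_Hk] in auto)

lemma Hk_bd_pdn:
  assumes m: "m \<in> {1..dmax}" and i: "i \<in> {1..n-1}" and j: "j \<in> {1..n-1}" and x: "x n = 0"
  shows "pd n (Hk m i j) x = 0"
proof (rule graded_components_zero[where \<Phi>="\<lambda>l. pd n (Hk l i j)" and P="\<lambda>x. x n = 0"
      and s=1 and c=0 and K="{1..dmax}" and m=m and x=x, OF finite_atLeastAtMost _ dilate_boundary _ m x])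
  show "homog 1 (l + 0) (pd n (Hk l i j))" for l using homog_pd[OF is_poly_Hk homog_Hk] by simp
  show "(\<Sum>l\<in>{1..dmax}. pd n (Hk l i j) y) = 0" if "y n = 0" for y
  proof -
    have "H i j = (\<lambda>y. \<Sum>l\<in>{1..dmax}. Hk l i j y)" using i j by (auto simp: decomp fun_eq_iff)
    then have "pd n (H i j) y = (\<Sum>l\<in>{1..dmax}. pd n (Hk l i j) y)" using is_poly_Hk by simp
    then show ?thesis using bd_pdn_H i j that by simp
  qed
qed

lemma Hk_bd_radial:
  assumes m: "m \<in> {1..dmax}" and i: "i \<in> {1..n-1}" and x: "x n = 0"
  shows "(\<Sum>j=1..n-1. x j * Hk m i j x) = 0"
proof (rule graded_components_zero[where \<Phi>="\<lambda>l x. \<Sum>j=1..n-1. x j * Hk l i j x" and P="\<lambda>x. x n = 0"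
      and s=0 and c=1 and K="{1..dmax}" and m=m and x=x, OF finite_atLeastAtMost _ dilate_boundary _ m x])
  show "homog 0 (l + 1) (\<lambda>x. \<Sum>j=1..n-1. x j * Hk l i j x)" for l
    using homog_mult[OF homog_coord homog_Hk] by (intro homog_sum) (simp add: add.commute)
  show "(\<Sum>l\<in>{1..dmax}. \<Sum>j=1..n-1. y j * Hk l i j y) = 0" if "y n = 0" for y
  proof -
    have "(\<Sum>l\<in>{1..dmax}. \<Sum>j=1..n-1. y j * Hk l i j y) = (\<Sum>j=1..n-1. y j * (\<Sum>l\<in>{1..dmax}. Hk l i j y))"
      by (subst sum.swap) (simp add: sum_distrib_left)
    also have "\<dots> = (\<Sum>j=1..n-1. y j * H i j y)"
      using i by (intro sum.cong refl) (auto simp: decomp)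
    finally show ?thesis using admissible_parts(4) i that by simp
  qed
qed

lemma hom_part_flat:
  assumes m: "m \<in> {1..dmax}"
  shows "flat_homog_tensor n m (Hk m)"
proof
  show "4 \<le> n" by (rule n4)
  show "1 \<le> m" using m by simp
  show "\<And>a b. Hk m a b \<in> poly_in {1..n}" by (rule poly_hom_part)
  show "\<And>a b. homog 0 m (Hk m a b)" by (rule homog_Hk)
  show "\<And>a b. a \<in> {1..n} \<Longrightarrow> b \<in> {1..n} \<Longrightarrow> Hk m a b = Hk m b a" by (rule Hk_sym[OF m])
  show "\<And>x. (\<Sum>a=1..n. Hk m a a x) = 0" by (rule Hk_trace[OF m])
  show "\<And>a. a \<in> {1..n} \<Longrightarrow> Hk m a n = (\<lambda>x. 0)" by (rule Hk_normal[OF m])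
  show "\<And>a b c d x. a \<in> {1..n} \<Longrightarrow> b \<in> {1..n} \<Longrightarrow> c \<in> {1..n} \<Longrightarrow> d \<in> {1..n} \<Longrightarrow>
      weyl n (Hk m) a b c d x = 0" by (rule Hk_weyl[OF m])
  show "\<And>i j x. i \<in> {1..n-1} \<Longrightarrow> j \<in> {1..n-1} \<Longrightarrow> x n = 0 \<Longrightarrow> pd n (Hk m i j) x = 0"
    by (rule Hk_bd_pdn[OF m])
  show "\<And>i x. i \<in> {1..n-1} \<Longrightarrow> x n = 0 \<Longrightarrow> (\<Sum>j=1..n-1. x j * Hk m i j x) = 0"
    by (rule Hk_bd_radial[OF m])
qed

end

theorem lemma1:
  fixes n :: nat and H :: "nat \<Rightarrow> nat \<Rightarrow> (nat \<Rightarrow> real) \<Rightarrow> real"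
  assumes "n \<ge> 4"
    and "admissible n H"
    and "\<forall>a\<in>{1..n}. \<forall>b\<in>{1..n}. \<forall>c\<in>{1..n}. \<forall>d\<in>{1..n}. \<forall>x. x n \<ge> 0 \<longrightarrow> weyl n H a b c d x = 0"
    and "\<forall>i\<in>{1..n-1}. \<forall>j\<in>{1..n-1}. \<forall>x. x n = 0 \<longrightarrow> pd n (H i j) x = 0"
  shows "\<forall>a\<in>{1..n}. \<forall>b\<in>{1..n}. \<forall>x. x n \<ge> 0 \<longrightarrow> H a b x = 0"
proof (intro ballI allI impI)
  fix a b x assume a: "a \<in> {1..n}" and b: "b \<in> {1..n}"
  define dmax where "dmax = (n - 2) div 2"
  obtain h where "\<forall>a\<in>{1..n}. \<forall>b\<in>{1..n}. \<forall>x.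
      H a b x = (\<Sum>\<alpha>\<in>multi_indices n dmax. h a b \<alpha> * monomial_fun n \<alpha> x)"
    using assms(2) unfolding admissible_def dmax_def by blast
  then interpret graded_tensor n dmax H h
    using assms by unfold_locales blast+
  have "H a b x = (\<Sum>m\<in>{1..dmax}. Hk m a b x)" using decomp a b .
  also have "\<dots> = 0"
    using flat_homog_tensor.G_zero[OF hom_part_flat] a b by simp
  finally show "H a b x = 0" .
qed

end
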